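(* Let $M_n$ be the operator below, and let $N\times K$ matrix functions $\varphi,\psi$ satisfy $$M_n\{\varphi\}=\varphi\Lambda,\qquad M_n^{\tau}\{\psi\}=\psi\tilde\Lambda,$$ where $\Lambda,\tilde\Lambda$ are constant $K\times K$ matrices. Let $C$ be a constant nondegenerate $K\times K$ matrix, and put $$\Delta=C+D^{-1}\{\psi^{\top}\varphi\},\qquad W=I-\varphi\Delta^{-1}D^{-1}\psi^{\top},\qquad \hat M_n:=WM_nW^{-1}.$$ Then $$\Phi:=\varphi\Delta^{-1}=W\{\varphi\}C^{-1},\qquad \Psi:=\psi(\Delta^{-1})^{\top}=(W^{-1})^{\tau}\{\psi\}(C^{\top})^{-1},$$ and these functions satisfy $$\hat M_n\{\Phi\}=\Phi\,C\Lambda C^{-1},\qquad \hat M_n^{\tau}\{\Psi\}=\Psi\,C^{\top}\tilde\Lambda (C^{\top})^{-1}.$$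
   Context: $D=\partial/\partial x$. Operators are formal matrix pseudodifferential operators in $D$ whose coefficients are $N\times N$ matrix functions of $x$ and $t_n$; they may also contain the derivation $\partial_{t_n}$, which commutes with $D$. $P\{f\}$ denotes the action of $P$ on $f$, with $D^{-1}$ a fixed $x$-antiderivative that commutes with $\partial_{t_n}$. The formal transpose $P^\tau$ is the anti-automorphism with $(fD^i)^\tau=(-1)^iD^if^\top$, $\partial_{t_n}^\tau=-\partial_{t_n}$, $(PQ)^\tau=Q^\tau P^\tau$. The operator is $$M_n=\alpha_n\partial_{t_n}-\tilde{\mathcal J}_nD^n-\sum_{i=0}^{n-1}v_iD^i-\gamma\mathbf q\mathcal M_0D^{-1}\mathbf r^\top,$$ where $\alpha_n,\gamma\in\mathbb C$, $\tilde{\mathcal J}_n$ is a constant $N\times N$ matrix, the $v_i$ are $N\times N$ matrix functions, $\mathbf q,\mathbf r$ are $N\times m$ matrix functions, and $\mathcal M_0$ is a constant $m\times m$ matrix. The inverse of $W$ is $W^{-1}=I+\varphi D^{-1}\Delta^{-1}\psi^\top$. *)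

theory Defs
  imports "HOL-Analysis.Analysis" "Jordan_Normal_Form.Gauss_Jordan_Elimination"
          "Jordan_Normal_Form.Determinant"
begin

text \<open>Matrix functions of the two real variables x (first argument) and t = t_n (second).\<close>
type_synonym mfun = "real \<Rightarrow> real \<Rightarrow> complex mat"

definition pdx :: "(real \<times> real \<Rightarrow> complex) \<Rightarrow> real \<times> real \<Rightarrow> complex" where
  "pdx f = (\<lambda>(x,t). vector_derivative (\<lambda>y. f (y,t)) (at x))"
definition pdt :: "(real \<times> real \<Rightarrow> complex) \<Rightarrow> real \<times> real \<Rightarrow> complex" where
  "pdt f = (\<lambda>(x,t). vector_derivative (\<lambda>s. f (x,s)) (at t))"

fun iter_pd :: "bool list \<Rightarrow> (real \<times> real \<Rightarrow> complex) \<Rightarrow> real \<times> real \<Rightarrow> complex" where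
  "iter_pd [] f = f"
| "iter_pd (b # bs) f = (if b then pdx else pdt) (iter_pd bs f)"

definition smooth2 :: "(real \<times> real \<Rightarrow> complex) \<Rightarrow> bool" where
  "smooth2 f \<longleftrightarrow> (\<forall>ws. continuous_on UNIV (iter_pd ws f) \<and>
      (\<forall>x t. (\<lambda>y. iter_pd ws f (y,t)) differentiable (at x)
          \<and> (\<lambda>s. iter_pd ws f (x,s)) differentiable (at t)))"

definition smooth_mfun :: "mfun \<Rightarrow> bool" where
  "smooth_mfun F \<longleftrightarrow> (\<forall>i j. smooth2 (\<lambda>(x,t). F x t $$ (i,j)))"

definition has_dims :: "mfun \<Rightarrow> nat \<Rightarrow> nat \<Rightarrow> bool" where
  "has_dims F r c \<longleftrightarrow> (\<forall>x t. F x t \<in> carrier_mat r c)"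

definition cst :: "complex mat \<Rightarrow> mfun" where "cst A = (\<lambda>x t. A)"
definition mmul :: "mfun \<Rightarrow> mfun \<Rightarrow> mfun" where "mmul F G = (\<lambda>x t. F x t * G x t)"
definition mtr :: "mfun \<Rightarrow> mfun" where "mtr F = (\<lambda>x t. transpose_mat (F x t))"
definition minv :: "complex mat \<Rightarrow> complex mat" where "minv A = the (mat_inverse A)"
definition finv :: "mfun \<Rightarrow> mfun" where "finv F = (\<lambda>x t. minv (F x t))"

definition dX :: "mfun \<Rightarrow> mfun" where
  "dX F = (\<lambda>x t. mat (dim_row (F x t)) (dim_col (F x t))
              (\<lambda>(i,j). vector_derivative (\<lambda>y. F y t $$ (i,j)) (at x)))"
definition dT :: "mfun \<Rightarrow> mfun" where
  "dT F = (\<lambda>x t. mat (dim_row (F x t)) (dim_col (F x t))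
              (\<lambda>(i,j). vector_derivative (\<lambda>s. F x s $$ (i,j)) (at t)))"

definition oint :: "real \<Rightarrow> real \<Rightarrow> (real \<Rightarrow> complex) \<Rightarrow> complex" where
  "oint a b f = (if a \<le> b then integral {a..b} f else - integral {b..a} f)"

text \<open>The fixed x-antiderivative D^{-1}: integration from a fixed base point x0.\<close>
definition dInv :: "real \<Rightarrow> mfun \<Rightarrow> mfun" where
  "dInv x0 F = (\<lambda>x t. mat (dim_row (F x t)) (dim_col (F x t))
              (\<lambda>(i,j). oint x0 x (\<lambda>s. F s t $$ (i,j))))"

datatype opr = Mul mfun | OD | ODinv | ODt | Scal complex | Comp opr opr | Plus opr opr

fun act :: "real \<Rightarrow> opr \<Rightarrow> mfun \<Rightarrow> mfun" where
  "act x0 (Mul f) g = mmul f g"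
| "act x0 OD g = dX g"
| "act x0 ODinv g = dInv x0 g"
| "act x0 ODt g = dT g"
| "act x0 (Scal c) g = (\<lambda>x t. c \<cdot>\<^sub>m g x t)"
| "act x0 (Comp P Q) g = act x0 P (act x0 Q g)"
| "act x0 (Plus P Q) g = (\<lambda>x t. act x0 P g x t + act x0 Q g x t)"

fun otr :: "opr \<Rightarrow> opr" where
  "otr (Mul f) = Mul (mtr f)"
| "otr OD = Comp (Scal (-1)) OD"
| "otr ODinv = Comp (Scal (-1)) ODinv"
| "otr ODt = Comp (Scal (-1)) ODt"
| "otr (Scal c) = Scal c"
| "otr (Comp P Q) = Comp (otr Q) (otr P)"
| "otr (Plus P Q) = Plus (otr P) (otr Q)"

fun Dpow :: "nat \<Rightarrow> opr" where
  "Dpow 0 = Scal 1"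
| "Dpow (Suc k) = Comp OD (Dpow k)"

text \<open>M_n = \<alpha> \<partial>_t - J D^n - \<Sum>_{i<n} v_i D^i - \<gamma> q M0 D^{-1} r^T.\<close>
definition Mop :: "nat \<Rightarrow> complex \<Rightarrow> complex mat \<Rightarrow> (nat \<Rightarrow> mfun) \<Rightarrow> complex
    \<Rightarrow> mfun \<Rightarrow> complex mat \<Rightarrow> mfun \<Rightarrow> opr" where
  "Mop n \<alpha> J v \<gamma> q M0 r =
     Plus (Comp (Scal \<alpha>) ODt)
    (Plus (Comp (Scal (-1)) (Comp (Mul (cst J)) (Dpow n)))
    (Plus (Comp (Scal (-1)) (foldr (\<lambda>i P. Plus (Comp (Mul (v i)) (Dpow i)) P) [0..<n] (Scal 0)))
          (Comp (Scal (- \<gamma>)) (Comp (Mul (mmul q (cst M0))) (Comp ODinv (Mul (mtr r)))))))"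

end

theory Submission
  imports Defs
begin

text \<open>
  The whole argument rests on one integral identity: since \<open>D \<Delta> = \<psi>\<^sup>T \<phi>\<close>, the derivative of
  \<open>\<Delta>\<^sup>-\<^sup>1\<close> is \<open>-\<Delta>\<^sup>-\<^sup>1 \<psi>\<^sup>T \<phi> \<Delta>\<^sup>-\<^sup>1\<close>, so \<open>D\<^sup>-\<^sup>1{\<Delta>\<^sup>-\<^sup>1 \<psi>\<^sup>T \<phi> \<Delta>\<^sup>-\<^sup>1} = C\<^sup>-\<^sup>1 - \<Delta>\<^sup>-\<^sup>1\<close>.
  From it and pointwise matrix algebra one gets the four dressing formulas
  \<open>W{\<phi>} = \<Phi> C\<close>, \<open>(W\<^sup>-\<^sup>1)\<^sup>\<tau>{\<psi>} = \<Psi> C\<^sup>T\<close>, \<open>W\<^sup>-\<^sup>1{\<Phi>} = \<phi> C\<^sup>-\<^sup>1\<close> and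
  \<open>W\<^sup>\<tau>{\<Psi>} = \<psi> (C\<^sup>T)\<^sup>-\<^sup>1\<close>. The eigenvalue equations then follow by a general conjugation
  principle, which only needs that \<open>W\<close>, \<open>M\<^sub>n\<close> and their transposes commute with right
  multiplication by constant matrices.
\<close>

section \<open>Smoothness of scalar functions of \<open>(x,t)\<close>\<close>

definition diff2 :: "(real \<times> real \<Rightarrow> complex) \<Rightarrow> bool" where
  "diff2 h \<longleftrightarrow> continuous_on UNIV h \<and> (\<forall>x t. (\<lambda>y. h (y,t)) differentiable (at x)
          \<and> (\<lambda>s. h (x,s)) differentiable (at t))"

lemma smooth2_iff: "smooth2 f \<longleftrightarrow> (\<forall>ws. diff2 (iter_pd ws f))"
  by (simp add: smooth2_def diff2_def)

lemma iter_pd_append: "iter_pd (ws @ [b]) f = iter_pd ws ((if b then pdx else pdt) f)"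
  by (induct ws) auto

lemma smooth2_diff2: "smooth2 f \<Longrightarrow> diff2 f"
  using smooth2_iff[of f] iter_pd.simps(1) by metis

lemma smooth2_pd: "smooth2 f \<Longrightarrow> smooth2 ((if b then pdx else pdt) f)"
  unfolding smooth2_iff by (metis iter_pd_append)

lemma smooth2_pdx: "smooth2 f \<Longrightarrow> smooth2 (pdx f)"
  using smooth2_pd[of f True] by simp
lemma smooth2_pdt: "smooth2 f \<Longrightarrow> smooth2 (pdt f)"
  using smooth2_pd[of f False] by simp

lemma diff2_add: "diff2 f \<Longrightarrow> diff2 g \<Longrightarrow> diff2 (\<lambda>z. f z + g z)"
  unfolding diff2_def by (auto intro!: continuous_intros)

lemma diff2_mult: "diff2 f \<Longrightarrow> diff2 g \<Longrightarrow> diff2 (\<lambda>z. f z * g z)"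
  unfolding diff2_def by (auto intro!: continuous_intros)

lemma diff2_const: "diff2 (\<lambda>z. c)"
  unfolding diff2_def by auto

lemma pd_add:
  assumes "diff2 f" "diff2 g"
  shows "(if b then pdx else pdt) (\<lambda>z. f z + g z)
       = (\<lambda>z. (if b then pdx else pdt) f z + (if b then pdx else pdt) g z)"
proof (rule ext, clarify)
  fix x t
  show "(if b then pdx else pdt) (\<lambda>z. f z + g z) (x,t)
       = (if b then pdx else pdt) f (x,t) + (if b then pdx else pdt) g (x,t)"
  proof (cases b)
    case True
    have f: "(\<lambda>y. f (y,t)) differentiable (at x)" and g: "(\<lambda>y. g (y,t)) differentiable (at x)"
      using assms unfolding diff2_def by auto
    have "((\<lambda>y. f (y,t) + g (y,t)) has_vector_derivative
       vector_derivative (\<lambda>y. f (y,t)) (at x) + vector_derivative (\<lambda>y. g (y,t)) (at x)) (at x)"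
      using f g by (intro has_vector_derivative_add) (auto simp: vector_derivative_works[symmetric])
    then show ?thesis using True by (simp add: pdx_def vector_derivative_at)
  next
    case False
    have f: "(\<lambda>s. f (x,s)) differentiable (at t)" and g: "(\<lambda>s. g (x,s)) differentiable (at t)"
      using assms unfolding diff2_def by auto
    have "((\<lambda>s. f (x,s) + g (x,s)) has_vector_derivative
       vector_derivative (\<lambda>s. f (x,s)) (at t) + vector_derivative (\<lambda>s. g (x,s)) (at t)) (at t)"
      using f g by (intro has_vector_derivative_add) (auto simp: vector_derivative_works[symmetric])
    then show ?thesis using False by (simp add: pdt_def vector_derivative_at)
  qed
qed

lemma pd_mult:
  assumes "diff2 f" "diff2 g"
  shows "(if b then pdx else pdt) (\<lambda>z. f z * g z)
       = (\<lambda>z. (if b then pdx else pdt) f z * g z + f z * (if b then pdx else pdt) g z)"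
proof (rule ext, clarify)
  fix x t
  show "(if b then pdx else pdt) (\<lambda>z. f z * g z) (x,t)
       = (if b then pdx else pdt) f (x,t) * g (x,t) + f (x,t) * (if b then pdx else pdt) g (x,t)"
  proof (cases b)
    case True
    have f: "(\<lambda>y. f (y,t)) differentiable (at x)" and g: "(\<lambda>y. g (y,t)) differentiable (at x)"
      using assms unfolding diff2_def by auto
    have "((\<lambda>y. f (y,t) * g (y,t)) has_vector_derivative
       f (x,t) * vector_derivative (\<lambda>y. g (y,t)) (at x) + vector_derivative (\<lambda>y. f (y,t)) (at x) * g (x,t)) (at x)"
      using f g by (intro has_vector_derivative_mult) (auto simp: vector_derivative_works[symmetric])
    then show ?thesis using True by (simp add: pdx_def vector_derivative_at algebra_simps)
  next
    case False
    have f: "(\<lambda>s. f (x,s)) differentiable (at t)" and g: "(\<lambda>s. g (x,s)) differentiable (at t)"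
      using assms unfolding diff2_def by auto
    have "((\<lambda>s. f (x,s) * g (x,s)) has_vector_derivative
       f (x,t) * vector_derivative (\<lambda>s. g (x,s)) (at t) + vector_derivative (\<lambda>s. f (x,s)) (at t) * g (x,t)) (at t)"
      using f g by (intro has_vector_derivative_mult) (auto simp: vector_derivative_works[symmetric])
    then show ?thesis using False by (simp add: pdt_def vector_derivative_at algebra_simps)
  qed
qed

lemma iter_pd_add:
  assumes "\<forall>u. length u < length ws \<longrightarrow> diff2 (iter_pd u f) \<and> diff2 (iter_pd u g)"
  shows "iter_pd ws (\<lambda>z. f z + g z) = (\<lambda>z. iter_pd ws f z + iter_pd ws g z)"
  using assms
proof (induct ws)
  case Nil then show ?case by simp
next
  case (Cons b ws)
  have IH: "iter_pd ws (\<lambda>z. f z + g z) = (\<lambda>z. iter_pd ws f z + iter_pd ws g z)"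
    using Cons by auto
  have "diff2 (iter_pd ws f)" "diff2 (iter_pd ws g)" using Cons.prems by auto
  then show ?case using IH pd_add[of "iter_pd ws f" "iter_pd ws g" b] by simp
qed

lemma smooth2_add: "smooth2 f \<Longrightarrow> smooth2 g \<Longrightarrow> smooth2 (\<lambda>z. f z + g z)"
  unfolding smooth2_iff
  by (subst iter_pd_add) (auto intro: diff2_add)

lemma iter_pd_const: "\<exists>c'. iter_pd ws (\<lambda>z. c) = (\<lambda>z. c')"
proof (induct ws)
  case Nil then show ?case by auto
next
  case (Cons b ws)
  then obtain c' where e: "iter_pd ws (\<lambda>z. c) = (\<lambda>z. c')" by auto
  show ?case using e by (auto simp: pdx_def pdt_def)
qed

lemma smooth2_const: "smooth2 (\<lambda>z. c)"
  unfolding smooth2_iff using iter_pd_const diff2_const by metis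

text \<open>Smoothness of products, by induction on the order of the derivative: by the product
  rule an order \<open>n+1\<close> derivative of \<open>f g\<close> is an order \<open>n\<close> derivative of
  \<open>f' g + f g'\<close>, a sum of products of smooth functions.\<close>
lemma iter_pd_mult_diff2:
  "\<forall>f g. smooth2 f \<longrightarrow> smooth2 g \<longrightarrow> (\<forall>ws. length ws \<le> n \<longrightarrow> diff2 (iter_pd ws (\<lambda>z. f z * g z)))"
proof (induct n)
  case 0
  then show ?case by (auto intro: diff2_mult smooth2_diff2)
next
  case (Suc n)
  show ?case
  proof (intro allI impI)
    fix f g and ws :: "bool list"
    assume f: "smooth2 f" and g: "smooth2 g" and l: "length ws \<le> Suc n"
    show "diff2 (iter_pd ws (\<lambda>z. f z * g z))"
    proof (cases "length ws \<le> n")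
      case True then show ?thesis using Suc f g by blast
    next
      case False
      then have "ws \<noteq> []" by auto
      then obtain ws' b where ws: "ws = ws' @ [b]" by (metis rev_exhaust)
      with l False have lw: "length ws' = n" by auto
      let ?d = "if b then pdx else pdt"
      have sf: "smooth2 (?d f)" and sg: "smooth2 (?d g)" using f g smooth2_pd by auto
      have "iter_pd ws (\<lambda>z. f z * g z) = iter_pd ws' (?d (\<lambda>z. f z * g z))"
        using ws iter_pd_append by simp
      also have "\<dots> = iter_pd ws' (\<lambda>z. ?d f z * g z + f z * ?d g z)"
        using pd_mult[OF smooth2_diff2[OF f] smooth2_diff2[OF g]] by simp
      also have "\<dots> = (\<lambda>z. iter_pd ws' (\<lambda>z. ?d f z * g z) z + iter_pd ws' (\<lambda>z. f z * ?d g z) z)"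
        using Suc sf sg f g lw by (intro iter_pd_add) auto
      finally show ?thesis using Suc sf sg f g lw by (auto intro!: diff2_add)
    qed
  qed
qed

lemma smooth2_mult: "smooth2 f \<Longrightarrow> smooth2 g \<Longrightarrow> smooth2 (\<lambda>z. f z * g z)"
  using iter_pd_mult_diff2 unfolding smooth2_iff by blast

lemma smooth2_sum: "finite S \<Longrightarrow> (\<And>k. k \<in> S \<Longrightarrow> smooth2 (f k)) \<Longrightarrow> smooth2 (\<lambda>z. \<Sum>k\<in>S. f k z)"
proof (induct S rule: finite_induct)
  case empty then show ?case using smooth2_const[of 0] by simp
next
  case (insert a S) then show ?case using smooth2_add[of "f a" "\<lambda>z. \<Sum>k\<in>S. f k z"] by simp
qed

definition entry :: "mfun \<Rightarrow> nat \<Rightarrow> nat \<Rightarrow> real \<times> real \<Rightarrow> complex" where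
  "entry F i j = (\<lambda>(x,t). F x t $$ (i,j))"

definition smooth_dims :: "nat \<Rightarrow> nat \<Rightarrow> mfun \<Rightarrow> bool" where
  "smooth_dims r c F \<longleftrightarrow> has_dims F r c \<and> (\<forall>i<r. \<forall>j<c. smooth2 (entry F i j))"

lemma entry_eqI: "(\<And>x t. F x t $$ (i,j) = g (x,t)) \<Longrightarrow> entry F i j = g"
  unfolding entry_def by auto

lemma mat_mult_entry: "A \<in> carrier_mat r c \<Longrightarrow> B \<in> carrier_mat c d \<Longrightarrow> i < r \<Longrightarrow> j < d \<Longrightarrow>
  (A * B) $$ (i,j) = (\<Sum>k<c. A $$ (i,k) * B $$ (k,j))"
  by (auto simp: scalar_prod_def atLeast0LessThan intro!: sum.cong)

lemma has_dims_mmul: "has_dims F r c \<Longrightarrow> has_dims G c d \<Longrightarrow> has_dims (mmul F G) r d"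
  unfolding has_dims_def mmul_def by (meson mult_carrier_mat)

lemma has_dims_cst: "A \<in> carrier_mat r c \<Longrightarrow> has_dims (cst A) r c"
  unfolding has_dims_def cst_def by auto

lemma has_dims_mtr: "has_dims F r c \<Longrightarrow> has_dims (mtr F) c r"
  unfolding has_dims_def mtr_def by auto

lemma smooth_dims_has_dims: "smooth_dims r c F \<Longrightarrow> has_dims F r c" unfolding smooth_dims_def by auto

lemma has_dims_row: "has_dims F r c \<Longrightarrow> dim_row (F x t) = r" unfolding has_dims_def by auto
lemma has_dims_col: "has_dims F r c \<Longrightarrow> dim_col (F x t) = c" unfolding has_dims_def by auto

lemma smooth_dims_mmul: assumes "smooth_dims r c F" "smooth_dims c d G" shows "smooth_dims r d (mmul F G)"
proof -
  have dF: "\<And>x t. F x t \<in> carrier_mat r c" and dG: "\<And>x t. G x t \<in> carrier_mat c d"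
    using assms unfolding smooth_dims_def has_dims_def by auto
  have "smooth2 (entry (mmul F G) i j)" if "i < r" "j < d" for i j
  proof -
    have "entry (mmul F G) i j = (\<lambda>z. \<Sum>k\<in>{..<c}. entry F i k z * entry G k j z)"
      by (rule entry_eqI) (simp add: entry_def mmul_def mat_mult_entry[OF dF dG that])
    moreover have "smooth2 (\<lambda>z. \<Sum>k\<in>{..<c}. entry F i k z * entry G k j z)"
      using assms that by (intro smooth2_sum smooth2_mult) (auto simp: smooth_dims_def)
    ultimately show ?thesis by simp
  qed
  then show ?thesis using assms by (auto simp: smooth_dims_def intro: has_dims_mmul)
qed

lemma smooth_dims_cst: "A \<in> carrier_mat r c \<Longrightarrow> smooth_dims r c (cst A)"
  unfolding smooth_dims_def using has_dims_cst
proof (intro conjI allI impI)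
  fix i j
  have "entry (cst A) i j = (\<lambda>z. A $$ (i,j))" by (rule entry_eqI) (simp add: cst_def)
  then show "smooth2 (entry (cst A) i j)" by (simp add: smooth2_const)
qed

lemma smooth_dims_mtr: "smooth_dims r c F \<Longrightarrow> smooth_dims c r (mtr F)"
  unfolding smooth_dims_def
proof (intro conjI allI impI)
  assume a: "has_dims F r c \<and> (\<forall>i<r. \<forall>j<c. smooth2 (entry F i j))"
  then show "has_dims (mtr F) c r" by (simp add: has_dims_mtr)
  fix i j assume "i < c" "j < r"
  have dr: "\<And>x t. dim_row (F x t) = r" "\<And>x t. dim_col (F x t) = c"
    using a by (auto simp: has_dims_def)
  have "entry (mtr F) i j = entry F j i"
    by (rule entry_eqI) (simp add: entry_def mtr_def dr \<open>i<c\<close> \<open>j<r\<close>)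
  then show "smooth2 (entry (mtr F) i j)" using a \<open>i<c\<close> \<open>j<r\<close> by simp
qed

lemma smooth_dims_smult: "smooth_dims r c F \<Longrightarrow> smooth_dims r c (\<lambda>x t. a \<cdot>\<^sub>m F x t)"
  unfolding smooth_dims_def
proof (intro conjI allI impI)
  assume a: "has_dims F r c \<and> (\<forall>i<r. \<forall>j<c. smooth2 (entry F i j))"
  then show "has_dims (\<lambda>x t. a \<cdot>\<^sub>m F x t) r c" by (simp add: has_dims_def)
  fix i j assume "i < r" "j < c"
  have dr: "\<And>x t. dim_row (F x t) = r" "\<And>x t. dim_col (F x t) = c"
    using a by (auto simp: has_dims_def)
  have "entry (\<lambda>x t. a \<cdot>\<^sub>m F x t) i j = (\<lambda>z. a * entry F i j z)"
    by (rule entry_eqI) (simp add: entry_def dr \<open>i<r\<close> \<open>j<c\<close>)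
  then show "smooth2 (entry (\<lambda>x t. a \<cdot>\<^sub>m F x t) i j)" using a \<open>i<r\<close> \<open>j<c\<close>
    by (simp add: smooth2_mult smooth2_const)
qed

lemma smooth_dims_add: "smooth_dims r c F \<Longrightarrow> smooth_dims r c G \<Longrightarrow> smooth_dims r c (\<lambda>x t. F x t + G x t)"
  unfolding smooth_dims_def
proof (intro conjI allI impI)
  assume a: "has_dims F r c \<and> (\<forall>i<r. \<forall>j<c. smooth2 (entry F i j))"
    and b: "has_dims G r c \<and> (\<forall>i<r. \<forall>j<c. smooth2 (entry G i j))"
  then show "has_dims (\<lambda>x t. F x t + G x t) r c" by (auto simp: has_dims_def)
  fix i j assume "i < r" "j < c"
  have dr: "\<And>x t. dim_row (F x t) = r" "\<And>x t. dim_col (F x t) = c"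
     "\<And>x t. dim_row (G x t) = r" "\<And>x t. dim_col (G x t) = c"
    using has_dims_row has_dims_col a b by metis+
  have "entry (\<lambda>x t. F x t + G x t) i j = (\<lambda>z. entry F i j z + entry G i j z)"
    by (rule entry_eqI) (simp add: entry_def dr \<open>i<r\<close> \<open>j<c\<close>)
  then show "smooth2 (entry (\<lambda>x t. F x t + G x t) i j)" using a b \<open>i<r\<close> \<open>j<c\<close>
    by (simp add: smooth2_add)
qed

lemma smooth_dims_dX: assumes "smooth_dims r c F" shows "smooth_dims r c (dX F)"
  unfolding smooth_dims_def
proof (intro conjI allI impI)
  have dr: "\<And>x t. dim_row (F x t) = r" "\<And>x t. dim_col (F x t) = c"
    using assms has_dims_row has_dims_col smooth_dims_has_dims by metis+
  show "has_dims (dX F) r c" unfolding has_dims_def dX_def by (simp add: dr)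
  fix i j assume "i < r" "j < c"
  have "entry (dX F) i j = pdx (entry F i j)"
    by (rule entry_eqI) (simp add: entry_def dX_def pdx_def dr \<open>i<r\<close> \<open>j<c\<close>)
  then show "smooth2 (entry (dX F) i j)" using assms \<open>i<r\<close> \<open>j<c\<close>
    by (simp add: smooth2_pdx smooth_dims_def)
qed

lemma smooth_dims_dT: assumes "smooth_dims r c F" shows "smooth_dims r c (dT F)"
  unfolding smooth_dims_def
proof (intro conjI allI impI)
  have dr: "\<And>x t. dim_row (F x t) = r" "\<And>x t. dim_col (F x t) = c"
    using assms has_dims_row has_dims_col smooth_dims_has_dims by metis+
  show "has_dims (dT F) r c" unfolding has_dims_def dT_def by (simp add: dr)
  fix i j assume "i < r" "j < c"
  have "entry (dT F) i j = pdt (entry F i j)"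
    by (rule entry_eqI) (simp add: entry_def dT_def pdt_def dr \<open>i<r\<close> \<open>j<c\<close>)
  then show "smooth2 (entry (dT F) i j)" using assms \<open>i<r\<close> \<open>j<c\<close>
    by (simp add: smooth2_pdt smooth_dims_def)
qed

lemma smooth_mfun_smooth_dims: "smooth_mfun F \<Longrightarrow> has_dims F r c \<Longrightarrow> smooth_dims r c F"
  unfolding smooth_mfun_def smooth_dims_def entry_def by auto

lemma smooth_dims_diff_x: assumes "smooth_dims r c F" "i < r" "j < c" shows "(\<lambda>y. F y t $$ (i,j)) differentiable (at x)"
proof -
  have "diff2 (entry F i j)" using assms by (intro smooth2_diff2) (simp add: smooth_dims_def)
  then show ?thesis unfolding diff2_def entry_def by simp
qed

lemma smooth_dims_diff_t: assumes "smooth_dims r c F" "i < r" "j < c" shows "(\<lambda>s. F x s $$ (i,j)) differentiable (at t)"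
proof -
  have "diff2 (entry F i j)" using assms by (intro smooth2_diff2) (simp add: smooth_dims_def)
  then show ?thesis unfolding diff2_def entry_def by simp
qed

lemma smooth_dims_cont_x: assumes "smooth_dims r c F" "i < r" "j < c" shows "continuous_on UNIV (\<lambda>y. F y t $$ (i,j))"
  unfolding continuous_on_eq_continuous_within
  by (intro ballI differentiable_imp_continuous_within smooth_dims_diff_x[OF assms])

section \<open>Right multiplication by constant matrices\<close>

lemma entrywise_op_right_mult:
  fixes L :: "real \<Rightarrow> real \<Rightarrow> (real \<Rightarrow> real \<Rightarrow> complex) \<Rightarrow> complex"
  assumes Op: "\<And>G. Op G = (\<lambda>x t. mat (dim_row (G x t)) (dim_col (G x t)) (\<lambda>(i,j). L x t (\<lambda>y s. G y s $$ (i,j))))"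
    and dF: "has_dims F r c" and A: "A \<in> carrier_mat c d"
    and lin: "\<And>x t i j. i < r \<Longrightarrow> j < d \<Longrightarrow>
       L x t (\<lambda>y s. \<Sum>k<c. F y s $$ (i,k) * A $$ (k,j)) = (\<Sum>k<c. L x t (\<lambda>y s. F y s $$ (i,k)) * A $$ (k,j))"
  shows "Op (mmul F (cst A)) = mmul (Op F) (cst A)" "has_dims (Op F) r c"
proof -
  have dF': "\<And>x t. F x t \<in> carrier_mat r c" using dF by (auto simp: has_dims_def)
  show hO: "has_dims (Op F) r c" using dF' unfolding has_dims_def Op by (simp add: has_dims_row[OF dF] has_dims_col[OF dF])
  show "Op (mmul F (cst A)) = mmul (Op F) (cst A)"
  proof (intro ext eq_matI)
    fix x t i j assume ij: "i < dim_row (mmul (Op F) (cst A) x t)" "j < dim_col (mmul (Op F) (cst A) x t)"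
    then have i: "i < r" and j: "j < d" using dF' A by (auto simp: mmul_def cst_def Op has_dims_row[OF dF])
    have e: "(\<lambda>y s. mmul F (cst A) y s $$ (i,j)) = (\<lambda>y s. \<Sum>k<c. F y s $$ (i,k) * A $$ (k,j))"
      by (intro ext) (simp add: mmul_def cst_def mat_mult_entry[OF dF' A i j])
    have "Op (mmul F (cst A)) x t $$ (i,j) = L x t (\<lambda>y s. mmul F (cst A) y s $$ (i,j))"
      using dF' A i j by (simp add: Op mmul_def cst_def has_dims_row[OF dF])
    also have "\<dots> = (\<Sum>k<c. L x t (\<lambda>y s. F y s $$ (i,k)) * A $$ (k,j))" using e lin i j by simp
    also have "\<dots> = mmul (Op F) (cst A) x t $$ (i,j)"
      unfolding mmul_def cst_def mat_mult_entry[OF hO[unfolded has_dims_def, rule_format] A i j]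
      using i by (simp add: Op has_dims_row[OF dF] has_dims_col[OF dF])
    finally show "Op (mmul F (cst A)) x t $$ (i,j) = mmul (Op F) (cst A) x t $$ (i,j)" .
  qed (use dF' A in \<open>auto simp: Op mmul_def cst_def\<close>)
qed

lemma dX_rmul: assumes "smooth_dims r c F" "A \<in> carrier_mat c d"
  shows "dX (mmul F (cst A)) = mmul (dX F) (cst A)"
proof (rule entrywise_op_right_mult[where L="\<lambda>x t g. vector_derivative (\<lambda>y. g y t) (at x)"])
  show "has_dims F r c" using assms smooth_dims_has_dims by auto
  fix x t i j assume "i < r" "j < d"
  have "((\<lambda>y. \<Sum>k<c. F y t $$ (i,k) * A $$ (k,j)) has_vector_derivative
     (\<Sum>k<c. vector_derivative (\<lambda>y. F y t $$ (i,k)) (at x) * A $$ (k,j))) (at x)"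
    using assms(1) \<open>i<r\<close>
    by (intro has_vector_derivative_sum has_vector_derivative_mult_left)
       (auto simp: vector_derivative_works[symmetric] intro: smooth_dims_diff_x)
  then show "vector_derivative (\<lambda>y. \<Sum>k<c. F y t $$ (i,k) * A $$ (k,j)) (at x) =
     (\<Sum>k<c. vector_derivative (\<lambda>y. F y t $$ (i,k)) (at x) * A $$ (k,j))"
    by (rule vector_derivative_at)
qed (use assms in \<open>auto simp: dX_def\<close>)

lemma dT_rmul: assumes "smooth_dims r c F" "A \<in> carrier_mat c d"
  shows "dT (mmul F (cst A)) = mmul (dT F) (cst A)"
proof (rule entrywise_op_right_mult[where L="\<lambda>x t g. vector_derivative (\<lambda>s. g x s) (at t)"])
  show "has_dims F r c" using assms smooth_dims_has_dims by auto
  fix x t i j assume "i < r" "j < d"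
  have "((\<lambda>s. \<Sum>k<c. F x s $$ (i,k) * A $$ (k,j)) has_vector_derivative
     (\<Sum>k<c. vector_derivative (\<lambda>s. F x s $$ (i,k)) (at t) * A $$ (k,j))) (at t)"
    using assms(1) \<open>i<r\<close>
    by (intro has_vector_derivative_sum has_vector_derivative_mult_left)
       (auto simp: vector_derivative_works[symmetric] intro: smooth_dims_diff_t)
  then show "vector_derivative (\<lambda>s. \<Sum>k<c. F x s $$ (i,k) * A $$ (k,j)) (at t) =
     (\<Sum>k<c. vector_derivative (\<lambda>s. F x s $$ (i,k)) (at t) * A $$ (k,j))"
    by (rule vector_derivative_at)
qed (use assms in \<open>auto simp: dT_def\<close>)

lemma oint_sum_mult:
  fixes c :: nat
  assumes "\<And>k. k < c \<Longrightarrow> continuous_on UNIV (f k)"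
  shows "oint a b (\<lambda>s. \<Sum>k<c. f k s * z k) = (\<Sum>k<c. oint a b (f k) * z k)"
proof -
  have I: "integral {l..u} (\<lambda>s. \<Sum>k<c. f k s * z k) = (\<Sum>k<c. integral {l..u} (f k) * z k)" for l u
  proof -
    have "((\<lambda>s. \<Sum>k<c. f k s * z k) has_integral (\<Sum>k<c. integral {l..u} (f k) * z k)) {l..u}"
      by (rule has_integral_sum[where f="\<lambda>k s. f k s * z k" and i="\<lambda>k. integral {l..u} (f k) * z k"])
         (auto intro!: has_integral_mult_left integrable_integral integrable_continuous_real
           intro: continuous_on_subset assms)
    then show ?thesis by (rule integral_unique)
  qed
  show ?thesis unfolding oint_def by (auto simp: I sum_negf)
qed

lemma dInv_rmul: assumes "smooth_dims r c F" "A \<in> carrier_mat c d"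
  shows "dInv x0 (mmul F (cst A)) = mmul (dInv x0 F) (cst A)"
proof (rule entrywise_op_right_mult[where L="\<lambda>x t g. oint x0 x (\<lambda>s. g s t)"])
  show "has_dims F r c" using assms smooth_dims_has_dims by auto
  fix x t i j assume "i < r" "j < d"
  show "oint x0 x (\<lambda>s. \<Sum>k<c. F s t $$ (i,k) * A $$ (k,j)) =
     (\<Sum>k<c. oint x0 x (\<lambda>s. F s t $$ (i,k)) * A $$ (k,j))"
    using assms(1) \<open>i<r\<close> by (intro oint_sum_mult) (auto intro: smooth_dims_cont_x)
qed (use assms in \<open>auto simp: dInv_def\<close>)

text \<open>The three operator classes below record sizes and right-linearity:
  \<open>pointwise_op\<close> for operators defined on all matrix functions (multiplications, scalars),
  \<open>smooth_op\<close> for operators preserving smoothness (adding \<open>D\<close>, \<open>\<partial>\<^sub>t\<close>), and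
  \<open>linear_op\<close> for operators only known to be right-linear on smooth arguments
  (which allows \<open>D\<^sup>-\<^sup>1\<close>).\<close>
definition right_linear :: "real \<Rightarrow> opr \<Rightarrow> mfun \<Rightarrow> nat \<Rightarrow> bool" where
  "right_linear x0 P F c \<longleftrightarrow> (\<forall>A d. A \<in> carrier_mat c d \<longrightarrow>
       act x0 P (mmul F (cst A)) = mmul (act x0 P F) (cst A))"

definition pointwise_op :: "real \<Rightarrow> opr \<Rightarrow> nat \<Rightarrow> nat \<Rightarrow> bool" where
  "pointwise_op x0 P r r' \<longleftrightarrow> (\<forall>F c. has_dims F r c \<longrightarrow> has_dims (act x0 P F) r' c \<and> right_linear x0 P F c)"
definition smooth_op :: "real \<Rightarrow> opr \<Rightarrow> nat \<Rightarrow> nat \<Rightarrow> bool" where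
  "smooth_op x0 P r r' \<longleftrightarrow> (\<forall>F c. smooth_dims r c F \<longrightarrow> smooth_dims r' c (act x0 P F) \<and> right_linear x0 P F c)"
definition linear_op :: "real \<Rightarrow> opr \<Rightarrow> nat \<Rightarrow> nat \<Rightarrow> bool" where
  "linear_op x0 P r r' \<longleftrightarrow> (\<forall>F c. smooth_dims r c F \<longrightarrow> has_dims (act x0 P F) r' c \<and> right_linear x0 P F c)"

lemma right_linear_Comp: "right_linear x0 Q F c \<Longrightarrow> right_linear x0 P (act x0 Q F) c \<Longrightarrow> right_linear x0 (Comp P Q) F c"
  unfolding right_linear_def by simp

lemma right_linear_Plus:
  assumes "has_dims (act x0 P F) r' c" "has_dims (act x0 Q F) r' c" "right_linear x0 P F c" "right_linear x0 Q F c"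
  shows "right_linear x0 (Plus P Q) F c"
  unfolding right_linear_def
proof (intro allI impI)
  fix A :: "complex mat" and d assume A: "A \<in> carrier_mat c d"
  have eP: "act x0 P (mmul F (cst A)) = mmul (act x0 P F) (cst A)"
    and eQ: "act x0 Q (mmul F (cst A)) = mmul (act x0 Q F) (cst A)"
    using assms(3,4) A unfolding right_linear_def by auto
  have d1: "\<And>x t. act x0 P F x t \<in> carrier_mat r' c" "\<And>x t. act x0 Q F x t \<in> carrier_mat r' c"
    using assms(1,2) unfolding has_dims_def by auto
  show "act x0 (Plus P Q) (mmul F (cst A)) = mmul (act x0 (Plus P Q) F) (cst A)"
    by (simp add: eP eQ) (auto intro!: ext simp: mmul_def cst_def add_mult_distrib_mat[OF d1 A])
qed

lemma right_linear_Scal: assumes "has_dims F r c" shows "right_linear x0 (Scal a) F c"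
  unfolding right_linear_def
proof (intro allI impI)
  fix A :: "complex mat" and d assume A: "A \<in> carrier_mat c d"
  show "act x0 (Scal a) (mmul F (cst A)) = mmul (act x0 (Scal a) F) (cst A)"
    using assms A unfolding has_dims_def
    by (auto intro!: ext simp: mmul_def cst_def mult_smult_assoc_mat[of _ r c _ d])
qed

lemma right_linear_Mul: assumes "has_dims f r' r" "has_dims F r c" shows "right_linear x0 (Mul f) F c"
  unfolding right_linear_def
proof (intro allI impI)
  fix A :: "complex mat" and d assume A: "A \<in> carrier_mat c d"
  show "act x0 (Mul f) (mmul F (cst A)) = mmul (act x0 (Mul f) F) (cst A)"
    using assms A unfolding has_dims_def
    by (auto intro!: ext simp: mmul_def cst_def assoc_mult_mat[of _ r' r _ c _ d])
qed

lemma has_dims_smult: "has_dims F r c \<Longrightarrow> has_dims (\<lambda>x t. a \<cdot>\<^sub>m F x t) r c"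
  unfolding has_dims_def by auto
lemma has_dims_add: "has_dims F r c \<Longrightarrow> has_dims G r c \<Longrightarrow> has_dims (\<lambda>x t. F x t + G x t) r c"
  unfolding has_dims_def by auto

lemma pointwise_op_Mul: "has_dims f r' r \<Longrightarrow> pointwise_op x0 (Mul f) r r'"
  unfolding pointwise_op_def by (auto intro: right_linear_Mul has_dims_mmul)
lemma pointwise_op_Scal: "pointwise_op x0 (Scal a) r r"
  unfolding pointwise_op_def by (auto intro: right_linear_Scal has_dims_smult)
lemma pointwise_op_Comp: "pointwise_op x0 Q r r' \<Longrightarrow> pointwise_op x0 P r' r'' \<Longrightarrow> pointwise_op x0 (Comp P Q) r r''"
  unfolding pointwise_op_def by (auto intro: right_linear_Comp)
lemma smooth_op_Mul: "smooth_dims r' r f \<Longrightarrow> smooth_op x0 (Mul f) r r'"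
  unfolding smooth_op_def by (auto intro: right_linear_Mul smooth_dims_mmul smooth_dims_has_dims)
lemma smooth_op_Scal: "smooth_op x0 (Scal a) r r"
  unfolding smooth_op_def by (auto intro: right_linear_Scal smooth_dims_smult smooth_dims_has_dims)
lemma smooth_op_OD: "smooth_op x0 OD r r"
  unfolding smooth_op_def right_linear_def by (auto intro: smooth_dims_dX dX_rmul)
lemma smooth_op_ODt: "smooth_op x0 ODt r r"
  unfolding smooth_op_def right_linear_def by (auto intro: smooth_dims_dT dT_rmul)
lemma smooth_op_Comp: "smooth_op x0 Q r r' \<Longrightarrow> smooth_op x0 P r' r'' \<Longrightarrow> smooth_op x0 (Comp P Q) r r''"
  unfolding smooth_op_def by (auto intro: right_linear_Comp)
lemma smooth_op_Plus: "smooth_op x0 P r r' \<Longrightarrow> smooth_op x0 Q r r' \<Longrightarrow> smooth_op x0 (Plus P Q) r r'"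
  unfolding smooth_op_def
proof (intro allI impI conjI)
  fix F c assume a: "\<forall>F c. smooth_dims r c F \<longrightarrow> smooth_dims r' c (act x0 P F) \<and> right_linear x0 P F c"
    "\<forall>F c. smooth_dims r c F \<longrightarrow> smooth_dims r' c (act x0 Q F) \<and> right_linear x0 Q F c" and F: "smooth_dims r c F"
  then have s: "smooth_dims r' c (act x0 P F)" "smooth_dims r' c (act x0 Q F)" "right_linear x0 P F c" "right_linear x0 Q F c" by auto
  then show "smooth_dims r' c (act x0 (Plus P Q) F)" by (simp add: smooth_dims_add)
  show "right_linear x0 (Plus P Q) F c" using s by (intro right_linear_Plus[where r'=r'] smooth_dims_has_dims)
qed

lemma linear_op_smooth_op: "smooth_op x0 P r r' \<Longrightarrow> linear_op x0 P r r'"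
  unfolding smooth_op_def linear_op_def by (auto intro: smooth_dims_has_dims)
lemma linear_op_Comp_smooth_op: "smooth_op x0 Q r r' \<Longrightarrow> linear_op x0 P r' r'' \<Longrightarrow> linear_op x0 (Comp P Q) r r''"
  unfolding smooth_op_def linear_op_def by (auto intro: right_linear_Comp)
lemma linear_op_Comp_pointwise_op: "linear_op x0 Q r r' \<Longrightarrow> pointwise_op x0 P r' r'' \<Longrightarrow> linear_op x0 (Comp P Q) r r''"
  unfolding pointwise_op_def linear_op_def by (auto intro: right_linear_Comp)
lemma linear_op_Plus: "linear_op x0 P r r' \<Longrightarrow> linear_op x0 Q r r' \<Longrightarrow> linear_op x0 (Plus P Q) r r'"
  unfolding linear_op_def by (auto intro: right_linear_Plus[where r'=r'] has_dims_add)
lemma linear_op_ODinv: "linear_op x0 ODinv r r"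
  unfolding linear_op_def right_linear_def
proof (intro allI impI conjI)
  fix F c assume F: "smooth_dims r c F"
  have dr: "\<And>x t. dim_row (F x t) = r" "\<And>x t. dim_col (F x t) = c"
    using F has_dims_row has_dims_col smooth_dims_has_dims by metis+
  show "has_dims (act x0 ODinv F) r c" unfolding has_dims_def by (simp add: dInv_def dr)
  fix A :: "complex mat" and d assume "A \<in> carrier_mat c d"
  then show "act x0 ODinv (mmul F (cst A)) = mmul (act x0 ODinv F) (cst A)"
    using F by (simp add: dInv_rmul)
qed

lemma smooth_op_Dpow: "smooth_op x0 (Dpow k) r r"
  by (induct k) (auto intro: smooth_op_Comp smooth_op_OD smooth_op_Scal)

lemma smooth_op_otr_Dpow: "smooth_op x0 (otr (Dpow k)) r r"
  by (induct k) (auto intro: smooth_op_Comp smooth_op_OD smooth_op_Scal)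

lemma smooth_op_foldr: "(\<forall>i\<in>set xs. smooth_dims N N (v i)) \<Longrightarrow>
   smooth_op x0 (foldr (\<lambda>i P. Plus (Comp (Mul (v i)) (Dpow i)) P) xs (Scal 0)) N N"
  by (induct xs) (auto intro!: smooth_op_Plus smooth_op_Comp smooth_op_Mul smooth_op_Dpow smooth_op_Scal)

lemma smooth_op_otr_foldr: "(\<forall>i\<in>set xs. smooth_dims N N (v i)) \<Longrightarrow>
   smooth_op x0 (otr (foldr (\<lambda>i P. Plus (Comp (Mul (v i)) (Dpow i)) P) xs (Scal 0))) N N"
  by (induct xs) (auto intro!: smooth_op_Plus smooth_op_Comp smooth_op_Mul smooth_op_otr_Dpow smooth_op_Scal smooth_dims_mtr)

lemma linear_op_M:
  assumes J: "J \<in> carrier_mat N N" and M0: "M0 \<in> carrier_mat m m"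
    and v: "\<And>i. i < n \<Longrightarrow> smooth_dims N N (v i)" and q: "smooth_dims N m q" and r: "smooth_dims N m r"
  shows "linear_op x0 (Mop n \<alpha> J v \<gamma> q M0 r) N N"
proof -
  have time_part: "linear_op x0 (Comp (Scal \<alpha>) ODt) N N" by (rule linear_op_smooth_op[OF smooth_op_Comp[OF smooth_op_ODt smooth_op_Scal]])
  have leading_part: "linear_op x0 (Comp (Scal (-1)) (Comp (Mul (cst J)) (Dpow n))) N N"
    by (rule linear_op_smooth_op[OF smooth_op_Comp[OF smooth_op_Comp[OF smooth_op_Dpow smooth_op_Mul[OF smooth_dims_cst[OF J]]] smooth_op_Scal]])
  have lower_part: "linear_op x0 (Comp (Scal (-1)) (foldr (\<lambda>i P. Plus (Comp (Mul (v i)) (Dpow i)) P) [0..<n] (Scal 0))) N N"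
    by (rule linear_op_smooth_op[OF smooth_op_Comp[OF smooth_op_foldr smooth_op_Scal]]) (use v in auto)
  have qM: "has_dims (mmul q (cst M0)) N m" using q M0 by (intro has_dims_mmul smooth_dims_has_dims has_dims_cst)
  have nonlocal_part: "linear_op x0 (Comp (Scal (- \<gamma>)) (Comp (Mul (mmul q (cst M0))) (Comp ODinv (Mul (mtr r))))) N N"
    by (rule linear_op_Comp_pointwise_op[OF linear_op_Comp_pointwise_op[OF linear_op_Comp_smooth_op[OF smooth_op_Mul[OF smooth_dims_mtr[OF r]] linear_op_ODinv] pointwise_op_Mul[OF qM]] pointwise_op_Scal])
  show ?thesis unfolding Mop_def by (intro linear_op_Plus time_part leading_part lower_part nonlocal_part)
qed

lemma linear_op_otr_M:
  assumes J: "J \<in> carrier_mat N N" and M0: "M0 \<in> carrier_mat m m"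
    and v: "\<And>i. i < n \<Longrightarrow> smooth_dims N N (v i)" and q: "smooth_dims N m q" and r: "smooth_dims N m r"
  shows "linear_op x0 (otr (Mop n \<alpha> J v \<gamma> q M0 r)) N N"
proof -
  have time_part: "linear_op x0 (otr (Comp (Scal \<alpha>) ODt)) N N" by (auto intro!: linear_op_smooth_op smooth_op_Comp smooth_op_Scal smooth_op_ODt)
  have leading_part: "linear_op x0 (otr (Comp (Scal (-1)) (Comp (Mul (cst J)) (Dpow n)))) N N"
    using J by (auto intro!: linear_op_smooth_op smooth_op_Comp smooth_op_Scal smooth_op_otr_Dpow smooth_op_Mul smooth_dims_cst smooth_dims_mtr)
  have lower_part: "linear_op x0 (otr (Comp (Scal (-1)) (foldr (\<lambda>i P. Plus (Comp (Mul (v i)) (Dpow i)) P) [0..<n] (Scal 0)))) N N"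
    using v by (auto intro!: linear_op_smooth_op smooth_op_Comp smooth_op_Scal smooth_op_otr_foldr)
  have qM: "smooth_dims m N (mtr (mmul q (cst M0)))" using q M0 by (intro smooth_dims_mtr smooth_dims_mmul smooth_dims_cst)
  have rr: "has_dims (mtr (mtr r)) N m" using r by (intro has_dims_mtr smooth_dims_has_dims smooth_dims_mtr)
  have nonlocal_part: "linear_op x0 (otr (Comp (Scal (- \<gamma>)) (Comp (Mul (mmul q (cst M0))) (Comp ODinv (Mul (mtr r)))))) N N"
    by (simp, rule linear_op_Comp_smooth_op[OF smooth_op_Scal linear_op_Comp_smooth_op[OF smooth_op_Mul[OF qM]
          linear_op_Comp_pointwise_op[OF linear_op_Comp_pointwise_op[OF linear_op_ODinv pointwise_op_Scal] pointwise_op_Mul[OF rr]]]])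
  show ?thesis unfolding Mop_def otr.simps(7) by (intro linear_op_Plus time_part leading_part lower_part nonlocal_part)
qed

section \<open>Calculus for the antiderivative \<open>D\<^sup>-\<^sup>1\<close>\<close>

lemma oint_same [simp]: "oint a a f = 0"
  unfolding oint_def by simp

lemma oint_split:
  fixes g :: "real \<Rightarrow> complex"
  assumes g: "continuous_on UNIV g" and la: "l \<le> a" and ly: "l \<le> y"
  shows "oint a y g = integral {l..y} g - integral {l..a} g"
proof (cases "a \<le> y")
  case True
  have "integral {l..a} g + integral {a..y} g = integral {l..y} g"
    using True la by (intro Henstock_Kurzweil_Integration.integral_combine integrable_continuous_real continuous_on_subset[OF g]) auto
  then show ?thesis using True unfolding oint_def by (simp add: algebra_simps)
next
  case False
  have "integral {l..y} g + integral {y..a} g = integral {l..a} g"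
    using False ly by (intro Henstock_Kurzweil_Integration.integral_combine integrable_continuous_real continuous_on_subset[OF g]) auto
  then show ?thesis using False unfolding oint_def by (simp add: algebra_simps)
qed

lemma oint_deriv:
  fixes g :: "real \<Rightarrow> complex"
  assumes g: "continuous_on UNIV g"
  shows "((\<lambda>y. oint a y g) has_vector_derivative g x) (at x)"
proof -
  define l where "l = min a x - 1"
  define u where "u = max a x + 1"
  have lx: "l < x" "x < u" unfolding l_def u_def by auto
  have "((\<lambda>y. integral {l..y} g) has_vector_derivative g x) (at x within {l..u})"
    using lx by (intro integral_has_vector_derivative continuous_on_subset[OF g]) auto
  then have "((\<lambda>y. integral {l..y} g) has_vector_derivative g x) (at x)"
    using at_within_Icc_at[OF lx] by simp
  then have d: "((\<lambda>y. integral {l..y} g - integral {l..a} g) has_vector_derivative g x) (at x)"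
    by (simp add: has_vector_derivative_diff_const)
  show ?thesis
  proof (rule has_vector_derivative_transform_within_open[OF d, of "{l<..}"])
    fix y assume "y \<in> {l<..}"
    then show "integral {l..y} g - integral {l..a} g = oint a y g"
      by (subst oint_split[OF g]) (auto simp: l_def)
  qed (use lx in auto)
qed

lemma oint_ftc:
  fixes f f' :: "real \<Rightarrow> complex"
  assumes "\<And>y. (f has_vector_derivative f' y) (at y)"
  shows "oint a b f' = f b - f a"
proof (cases "a \<le> b")
  case True
  have "(f' has_integral (f b - f a)) {a..b}"
    using True assms by (intro fundamental_theorem_of_calculus) (auto intro: has_vector_derivative_at_within)
  then show ?thesis using True unfolding oint_def by (simp add: integral_unique)
next
  case False
  have "(f' has_integral (f a - f b)) {b..a}"
    using False assms by (intro fundamental_theorem_of_calculus) (auto intro: has_vector_derivative_at_within)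
  then show ?thesis using False unfolding oint_def by (simp add: integral_unique)
qed

section \<open>Inverses of matrices and of matrix functions\<close>

lemma minv_props:
  assumes A: "A \<in> carrier_mat n n" and d: "det A \<noteq> 0"
  shows "minv A \<in> carrier_mat n n" "A * minv A = 1\<^sub>m n" "minv A * A = 1\<^sub>m n"
proof -
  have "mat_inverse A \<noteq> None"
    using mat_inverse(1)[OF A, of "()"] det_non_zero_imp_unit[OF A d, of "()"] by blast
  then obtain B where "mat_inverse A = Some B" by auto
  then have "A * B = 1\<^sub>m n \<and> B * A = 1\<^sub>m n \<and> B \<in> carrier_mat n n" using mat_inverse(2)[OF A] by auto
  moreover have "minv A = B" using \<open>mat_inverse A = Some B\<close> by (simp add: minv_def)
  ultimately show "minv A \<in> carrier_mat n n" "A * minv A = 1\<^sub>m n" "minv A * A = 1\<^sub>m n" by auto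
qed

text \<open>Cramer's rule: the inverse is the scaled adjugate. It shows that the entries of an
  inverse are rational functions of the entries.\<close>
lemma minv_adj:
  assumes A: "A \<in> carrier_mat n n" and d: "det A \<noteq> 0"
  shows "minv A = (1 / det A) \<cdot>\<^sub>m adj_mat A"
proof -
  note mp = minv_props[OF A d]
  have adj: "adj_mat A \<in> carrier_mat n n" "adj_mat A * A = det A \<cdot>\<^sub>m 1\<^sub>m n" using adj_mat[OF A] by auto
  have "(1 / det A) \<cdot>\<^sub>m adj_mat A = ((1 / det A) \<cdot>\<^sub>m adj_mat A) * (A * minv A)"
    using mp adj by simp
  also have "\<dots> = (((1 / det A) \<cdot>\<^sub>m adj_mat A) * A) * minv A"
    using mp adj A by (simp add: assoc_mult_mat[of _ n n _ n _ n])
  also have "((1 / det A) \<cdot>\<^sub>m adj_mat A) * A = 1\<^sub>m n"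
  proof -
    have "((1 / det A) \<cdot>\<^sub>m adj_mat A) * A = (1 / det A) \<cdot>\<^sub>m (det A \<cdot>\<^sub>m 1\<^sub>m n)"
      using adj A by (simp add: mult_smult_assoc_mat[of _ n n _ n])
    also have "\<dots> = 1\<^sub>m n" using d by (intro eq_matI) auto
    finally show ?thesis .
  qed
  finally show ?thesis using mp by simp
qed

text \<open>Determinants, and hence entries of inverses, of differentiable matrix functions are
  differentiable (via the Leibniz formula and Cramer's rule).\<close>
lemma differentiable_prod_fin:
  fixes f :: "'i \<Rightarrow> real \<Rightarrow> complex"
  shows "finite S \<Longrightarrow> (\<And>i. i \<in> S \<Longrightarrow> f i differentiable (at x)) \<Longrightarrow> (\<lambda>y. \<Prod>i\<in>S. f i y) differentiable (at x)"
proof (induct S rule: finite_induct)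
  case empty then show ?case by simp
next
  case (insert a S)
  then show ?case by (simp add: differentiable_mult)
qed

lemma det_differentiable:
  fixes Mf :: "real \<Rightarrow> complex mat"
  assumes car: "\<And>y. Mf y \<in> carrier_mat n n"
    and d: "\<And>i j. i < n \<Longrightarrow> j < n \<Longrightarrow> (\<lambda>y. Mf y $$ (i,j)) differentiable (at x)"
  shows "(\<lambda>y. det (Mf y)) differentiable (at x)"
proof -
  have e: "(\<lambda>y. det (Mf y)) = (\<lambda>y. \<Sum>p \<in> {p. p permutes {0..<n}}. signof p * (\<Prod>i = 0..<n. Mf y $$ (i, p i)))"
    using det_def'[OF car] by auto
  have "(\<lambda>y. \<Sum>p \<in> {p. p permutes {0..<n}}. signof p * (\<Prod>i = 0..<n. Mf y $$ (i, p i))) differentiable (at x)"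
  proof (intro differentiable_sum ballI differentiable_mult differentiable_const differentiable_prod_fin)
    show "finite {p. p permutes {0..<n}}" by (rule finite_permutations) simp
    fix p i assume p: "p \<in> {p. p permutes {0..<n}}" and i: "i \<in> {0..<n}"
    then have "p i < n" using permutes_in_image[of p "{0..<n}" i] by auto
    then show "(\<lambda>y. Mf y $$ (i, p i)) differentiable (at x)" using i d by auto
  qed auto
  then show ?thesis using e by simp
qed

lemma minv_entry_differentiable:
  fixes Mf :: "real \<Rightarrow> complex mat"
  assumes car: "\<And>y. Mf y \<in> carrier_mat n n" and dt: "\<And>y. det (Mf y) \<noteq> 0"
    and d: "\<And>i j. i < n \<Longrightarrow> j < n \<Longrightarrow> (\<lambda>y. Mf y $$ (i,j)) differentiable (at x)"
    and ij: "i < n" "j < n"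
  shows "(\<lambda>y. minv (Mf y) $$ (i,j)) differentiable (at x)"
proof -
  have e: "minv (Mf y) $$ (i,j) = (-1)^(j+i) * det (mat_delete (Mf y) j i) / det (Mf y)" for y
    using minv_adj[OF car dt] car[of y] ij by (simp add: adj_mat_def cofactor_def)
  have dd: "(\<lambda>y. det (mat_delete (Mf y) j i)) differentiable (at x)"
  proof (rule det_differentiable[where n="n-1"])
    show "mat_delete (Mf y) j i \<in> carrier_mat (n-1) (n-1)" for y using car by (rule mat_delete_carrier)
    fix a b assume "a < n - 1" "b < n - 1"
    then have "(\<lambda>y. mat_delete (Mf y) j i $$ (a,b)) = (\<lambda>y. Mf y $$ (if a < j then a else Suc a, if b < i then b else Suc b))"
      using car by (auto simp: mat_delete_def carrier_matD(1,2)[OF car])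
    moreover have "(if a < j then a else Suc a) < n" "(if b < i then b else Suc b) < n"
      using \<open>a < n - 1\<close> \<open>b < n - 1\<close> by auto
    ultimately show "(\<lambda>y. mat_delete (Mf y) j i $$ (a,b)) differentiable (at x)" using d by simp
  qed
  have "(\<lambda>y. (-1)^(j+i) * det (mat_delete (Mf y) j i) / det (Mf y)) differentiable (at x)"
    using dd det_differentiable[OF car d] dt by (intro differentiable_divide differentiable_mult) auto
  then show ?thesis using e by simp
qed

lemma mat_mult_has_vector_derivative:
  fixes A B :: "real \<Rightarrow> complex mat"
  assumes A: "\<And>y. A y \<in> carrier_mat r c" and B: "\<And>y. B y \<in> carrier_mat c d"
    and A': "A' \<in> carrier_mat r c" and B': "B' \<in> carrier_mat c d"
    and dA: "\<And>i k. i < r \<Longrightarrow> k < c \<Longrightarrow> ((\<lambda>y. A y $$ (i,k)) has_vector_derivative A' $$ (i,k)) (at z)"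
    and dB: "\<And>k j. k < c \<Longrightarrow> j < d \<Longrightarrow> ((\<lambda>y. B y $$ (k,j)) has_vector_derivative B' $$ (k,j)) (at z)"
    and ij: "i < r" "j < d"
  shows "((\<lambda>y. (A y * B y) $$ (i,j)) has_vector_derivative (A z * B' + A' * B z) $$ (i,j)) (at z)"
proof -
  have "((\<lambda>y. \<Sum>k<c. A y $$ (i,k) * B y $$ (k,j)) has_vector_derivative
          (\<Sum>k<c. A z $$ (i,k) * B' $$ (k,j) + A' $$ (i,k) * B z $$ (k,j))) (at z)"
    using ij by (intro has_vector_derivative_sum has_vector_derivative_mult dA dB) auto
  moreover have "(A z * B' + A' * B z) $$ (i,j)
      = (\<Sum>k<c. A z $$ (i,k) * B' $$ (k,j) + A' $$ (i,k) * B z $$ (k,j))"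
    using A[of z] B[of z] A' B' ij
    by (simp add: mat_mult_entry[OF A[of z] B' ij] mat_mult_entry[OF A' B[of z] ij] sum.distrib)
  ultimately show ?thesis
    using mat_mult_entry[OF A B ij] by simp
qed

lemma solve_inverse_derivative:
  fixes A B A' B' :: "'a :: comm_ring_1 mat"
  assumes A: "A \<in> carrier_mat n n" and B: "B \<in> carrier_mat n n"
    and A': "A' \<in> carrier_mat n n" and B': "B' \<in> carrier_mat n n"
    and BA: "B * A = 1\<^sub>m n" and zero: "A * B' + A' * B = 0\<^sub>m n n"
  shows "B' = - (B * (A' * B))"
proof -
  have "B * (A * B') = B'"
    using A B B' BA by (simp flip: assoc_mult_mat[of _ n n _ n _ n])
  moreover have "B * (A * B' + A' * B) = B * (A * B') + B * (A' * B)"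
    by (rule mult_add_distrib_mat) (use A B A' B' in auto)
  ultimately have "B' + B * (A' * B) = B * (A * B' + A' * B)" by simp
  also have "\<dots> = 0\<^sub>m n n" using zero B by simp
  finally have sum_zero: "B' + B * (A' * B) = 0\<^sub>m n n" .
  show ?thesis
  proof (rule eq_matI)
    fix i j assume "i < dim_row (- (B * (A' * B)))" "j < dim_col (- (B * (A' * B)))"
    then have ij: "i < n" "j < n" using B by auto
    have "(B' + B * (A' * B)) $$ (i,j) = 0" using sum_zero ij by simp
    then show "B' $$ (i,j) = (- (B * (A' * B))) $$ (i,j)"
      using ij B' B A' by (simp add: eq_neg_iff_add_eq_0)
  qed (use B' B A' in auto)
qed

text \<open>Derivative of the inverse of an invertible matrix function:
  \<open>(A\<^sup>-\<^sup>1)' = - A\<^sup>-\<^sup>1 A' A\<^sup>-\<^sup>1\<close>, obtained by differentiating \<open>A A\<^sup>-\<^sup>1 = 1\<close>.\<close>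
lemma minv_has_vector_derivative:
  fixes A :: "real \<Rightarrow> complex mat"
  assumes A: "\<And>y. A y \<in> carrier_mat n n" and detA: "\<And>y. det (A y) \<noteq> 0"
    and A': "A' \<in> carrier_mat n n"
    and dA: "\<And>i j. i < n \<Longrightarrow> j < n \<Longrightarrow> ((\<lambda>y. A y $$ (i,j)) has_vector_derivative A' $$ (i,j)) (at z)"
    and ij: "i < n" "j < n"
  shows "((\<lambda>y. minv (A y) $$ (i,j)) has_vector_derivative
           (- (minv (A z) * (A' * minv (A z)))) $$ (i,j)) (at z)"
proof -
  define B where "B = (\<lambda>y. minv (A y))"
  have dimB: "\<And>y. B y \<in> carrier_mat n n" and AB: "\<And>y. A y * B y = 1\<^sub>m n"
    and BA: "\<And>y. B y * A y = 1\<^sub>m n"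
    unfolding B_def using minv_props[OF A detA] by auto
  define B' where "B' = mat n n (\<lambda>(i,j). vector_derivative (\<lambda>y. B y $$ (i,j)) (at z))"
  have dimB': "B' \<in> carrier_mat n n" unfolding B'_def by auto
  have dB: "((\<lambda>y. B y $$ (i,j)) has_vector_derivative B' $$ (i,j)) (at z)"
    if "i < n" "j < n" for i j
  proof -
    have "(\<lambda>y. B y $$ (i,j)) differentiable (at z)"
      unfolding B_def using that A'
      by (intro minv_entry_differentiable[OF A detA]) (auto intro: differentiableI_vector[OF dA])
    then show ?thesis using that unfolding B'_def by (simp add: vector_derivative_works)
  qed
  text \<open>\<open>A B\<close> is constant, so its derivative \<open>A B' + A' B\<close> vanishes.\<close>
  have prod_zero: "A z * B' + A' * B z = 0\<^sub>m n n"
  proof (rule eq_matI)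
    fix i j assume "i < dim_row (0\<^sub>m n n :: complex mat)" "j < dim_col (0\<^sub>m n n :: complex mat)"
    then have ij: "i < n" "j < n" by auto
    have "((\<lambda>y. (A y * B y) $$ (i,j)) has_vector_derivative (A z * B' + A' * B z) $$ (i,j)) (at z)"
      by (rule mat_mult_has_vector_derivative[OF A dimB A' dimB' dA dB ij])
    then have "((\<lambda>y. 1\<^sub>m n $$ (i,j)) has_vector_derivative (A z * B' + A' * B z) $$ (i,j)) (at z)"
      by (simp add: AB)
    then have "(A z * B' + A' * B z) $$ (i,j) = 0"
      by (rule vector_derivative_unique_at[OF _ has_vector_derivative_const])
    then show "(A z * B' + A' * B z) $$ (i,j) = 0\<^sub>m n n $$ (i,j)" using ij by simp
  qed (use A[of z] dimB' A' dimB[of z] in auto)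
  have "B' = - (B z * (A' * B z))"
    by (rule solve_inverse_derivative[OF A[of z] dimB[of z] A' dimB' BA prod_zero])
  then show ?thesis using dB[OF ij] unfolding B_def by simp
qed

lemma has_dims_dInv: assumes "has_dims F r c" shows "has_dims (dInv x0 F) r c"
  unfolding has_dims_def dInv_def by (simp add: has_dims_row[OF assms] has_dims_col[OF assms])

lemma dInv_base: assumes "has_dims F r c" shows "dInv x0 F x0 t = 0\<^sub>m r c"
  by (intro eq_matI) (auto simp: dInv_def has_dims_row[OF assms] has_dims_col[OF assms])

lemma dInv_has_vector_derivative:
  assumes F: "smooth_dims r c F" and ij: "i < r" "j < c"
  shows "((\<lambda>y. dInv x0 F y t $$ (i,j)) has_vector_derivative F z t $$ (i,j)) (at z)"
  using oint_deriv[OF smooth_dims_cont_x[OF F ij]] ij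
  by (simp add: dInv_def has_dims_row[OF smooth_dims_has_dims[OF F]] has_dims_col[OF smooth_dims_has_dims[OF F]])

text \<open>The central integral identity behind the dressing: for \<open>\<Delta> = C + D\<^sup>-\<^sup>1{G}\<close> one has
  \<open>\<Delta>' = G\<close>, hence \<open>(\<Delta>\<^sup>-\<^sup>1)' = -\<Delta>\<^sup>-\<^sup>1 G \<Delta>\<^sup>-\<^sup>1\<close>, and integrating from the base point
  (where \<open>\<Delta> = C\<close>) gives \<open>D\<^sup>-\<^sup>1{\<Delta>\<^sup>-\<^sup>1 G \<Delta>\<^sup>-\<^sup>1} = C\<^sup>-\<^sup>1 - \<Delta>\<^sup>-\<^sup>1\<close>.\<close>
lemma dInv_inverse_sandwich:
  fixes G :: mfun and C :: "complex mat"
  assumes G: "smooth_dims K K G" and C: "C \<in> carrier_mat K K"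
    and detD: "\<And>x t. det (C + dInv x0 G x t) \<noteq> 0"
  defines "\<Delta> \<equiv> (\<lambda>x t. C + dInv x0 G x t)"
  shows "dInv x0 (\<lambda>x t. finv \<Delta> x t * (G x t * finv \<Delta> x t)) = (\<lambda>x t. minv C - finv \<Delta> x t)"
proof (intro ext)
  fix x t
  have dimG: "\<And>y. G y t \<in> carrier_mat K K"
    using smooth_dims_has_dims[OF G] unfolding has_dims_def by blast
  have dimI: "\<And>y. dInv x0 G y t \<in> carrier_mat K K"
    using has_dims_dInv[OF smooth_dims_has_dims[OF G]] unfolding has_dims_def by blast
  have dimD: "\<And>y. \<Delta> y t \<in> carrier_mat K K" unfolding \<Delta>_def using C dimI by auto
  have detD': "\<And>y. det (\<Delta> y t) \<noteq> 0" unfolding \<Delta>_def by (rule detD)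
  have invD: "\<And>y. finv \<Delta> y t \<in> carrier_mat K K"
    unfolding finv_def using minv_props(1)[OF dimD detD'] .
  have base: "finv \<Delta> x0 t = minv C"
    unfolding \<Delta>_def finv_def using dInv_base[OF smooth_dims_has_dims[OF G]] C by simp
  have dimC': "minv C \<in> carrier_mat K K" using invD[of x0] base by simp
  have dD: "((\<lambda>y. \<Delta> y t $$ (i,j)) has_vector_derivative G z t $$ (i,j)) (at z)"
    if ij: "i < K" "j < K" for i j z
  proof -
    have "((\<lambda>y. C $$ (i,j) + dInv x0 G y t $$ (i,j)) has_vector_derivative 0 + G z t $$ (i,j)) (at z)"
      by (intro has_vector_derivative_add has_vector_derivative_const dInv_has_vector_derivative[OF G ij])
    moreover have "(\<lambda>y. \<Delta> y t $$ (i,j)) = (\<lambda>y. C $$ (i,j) + dInv x0 G y t $$ (i,j))"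
    proof
      fix y show "\<Delta> y t $$ (i,j) = C $$ (i,j) + dInv x0 G y t $$ (i,j)"
        unfolding \<Delta>_def using dimI[of y] C ij by simp
    qed
    ultimately show ?thesis by simp
  qed
  have deriv: "((\<lambda>y. - finv \<Delta> y t $$ (i,j)) has_vector_derivative
       (finv \<Delta> z t * (G z t * finv \<Delta> z t)) $$ (i,j)) (at z)" if ij: "i < K" "j < K" for i j z
  proof -
    have "((\<lambda>y. minv (\<Delta> y t) $$ (i,j)) has_vector_derivative
        (- (minv (\<Delta> z t) * (G z t * minv (\<Delta> z t)))) $$ (i,j)) (at z)"
      by (rule minv_has_vector_derivative[OF dimD detD' dimG[of z] dD ij])
    then show ?thesis
      using ij invD[of z] dimG[of z] by (auto simp: finv_def dest: has_vector_derivative_minus)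
  qed
  show "dInv x0 (\<lambda>x t. finv \<Delta> x t * (G x t * finv \<Delta> x t)) x t = minv C - finv \<Delta> x t"
  proof (rule eq_matI)
    fix i j assume "i < dim_row (minv C - finv \<Delta> x t)" "j < dim_col (minv C - finv \<Delta> x t)"
    then have ij: "i < K" "j < K" using invD[of x] by auto
    have "dInv x0 (\<lambda>x t. finv \<Delta> x t * (G x t * finv \<Delta> x t)) x t $$ (i,j)
        = oint x0 x (\<lambda>s. (finv \<Delta> s t * (G s t * finv \<Delta> s t)) $$ (i,j))"
      using ij invD[of x] dimG[of x] by (simp add: dInv_def)
    also have "\<dots> = - finv \<Delta> x t $$ (i,j) - - finv \<Delta> x0 t $$ (i,j)"
      by (rule oint_ftc[OF deriv[OF ij]])
    finally show "dInv x0 (\<lambda>x t. finv \<Delta> x t * (G x t * finv \<Delta> x t)) x t $$ (i,j)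
        = (minv C - finv \<Delta> x t) $$ (i,j)"
      using ij invD[of x] dimC' base by simp
  qed (use invD[of x] dimG[of x] dimC' in \<open>auto simp: dInv_def\<close>)
qed

lemma dInv_mtr: assumes "has_dims F r c" shows "dInv x0 (mtr F) = mtr (dInv x0 F)"
proof (intro ext eq_matI)
  fix x t i j
  assume "i < dim_row (mtr (dInv x0 F) x t)" "j < dim_col (mtr (dInv x0 F) x t)"
  then have ij: "i < c" "j < r" using has_dims_row[OF assms] has_dims_col[OF assms] by (auto simp: mtr_def dInv_def)
  show "dInv x0 (mtr F) x t $$ (i,j) = mtr (dInv x0 F) x t $$ (i,j)"
    using ij has_dims_row[OF assms] has_dims_col[OF assms] by (simp add: mtr_def dInv_def)
qed (auto simp: mtr_def dInv_def)

lemma dInv_neg: assumes "has_dims F r c"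
  shows "dInv x0 (\<lambda>x t. (-1) \<cdot>\<^sub>m F x t) = (\<lambda>x t. (-1) \<cdot>\<^sub>m dInv x0 F x t)"
proof (intro ext eq_matI)
  fix x t i j
  assume "i < dim_row ((-1) \<cdot>\<^sub>m dInv x0 F x t)" "j < dim_col ((-1) \<cdot>\<^sub>m dInv x0 F x t)"
  then have ij: "i < r" "j < c" using has_dims_row[OF assms] has_dims_col[OF assms] by (auto simp: dInv_def)
  have e: "(\<lambda>s. ((-1) \<cdot>\<^sub>m F s t) $$ (i,j)) = (\<lambda>s. - F s t $$ (i,j))"
    using ij has_dims_row[OF assms] has_dims_col[OF assms] by simp
  show "dInv x0 (\<lambda>x t. (-1) \<cdot>\<^sub>m F x t) x t $$ (i,j) = ((-1) \<cdot>\<^sub>m dInv x0 F x t) $$ (i,j)"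
    using ij has_dims_row[OF assms] has_dims_col[OF assms] by (simp add: dInv_def e oint_def)
qed (auto simp: dInv_def)

lemma mmul_cst_assoc: "has_dims F r c \<Longrightarrow> A \<in> carrier_mat c d \<Longrightarrow> B \<in> carrier_mat d e \<Longrightarrow>
   mmul (mmul F (cst A)) (cst B) = mmul F (cst (A * B))"
  unfolding has_dims_def mmul_def cst_def by (auto intro!: ext simp: assoc_mult_mat[of _ r c _ d _ e])

text \<open>The pointwise matrix identities behind the four dressing formulas below, with
  \<open>B = \<Delta>\<^sup>-\<^sup>1\<close> and \<open>D = \<Delta>\<close>.\<close>
lemma dress_phi_identity:
  fixes \<phi> B D C :: "complex mat"
  assumes "\<phi> \<in> carrier_mat N K" "B \<in> carrier_mat K K" "D \<in> carrier_mat K K" "C \<in> carrier_mat K K"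
    and "B * D = 1\<^sub>m K"
  shows "1 \<cdot>\<^sub>m \<phi> + (-1) \<cdot>\<^sub>m ((\<phi> * B) * (D - C)) = (\<phi> * B) * C"
proof -
  have "(\<phi> * B) * (D - C) = (\<phi> * B) * D - (\<phi> * B) * C"
    using assms by (intro mult_minus_distrib_mat[where n=K]) auto
  also have "(\<phi> * B) * D = \<phi>" using assms by (simp add: assoc_mult_mat[of _ N K _ K _ K])
  finally have e: "(\<phi> * B) * (D - C) = \<phi> - (\<phi> * B) * C" .
  show ?thesis unfolding e using assms by (intro eq_matI) auto
qed

lemma undress_psi_identity:
  fixes \<psi> B D C :: "complex mat"
  assumes "\<psi> \<in> carrier_mat N K" "B \<in> carrier_mat K K" "D \<in> carrier_mat K K" "C \<in> carrier_mat K K"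
    and "D * B = 1\<^sub>m K"
  shows "1 \<cdot>\<^sub>m \<psi> + \<psi> * (transpose_mat B * ((-1) \<cdot>\<^sub>m transpose_mat (D - C))) = (\<psi> * transpose_mat B) * transpose_mat C"
proof -
  have t: "transpose_mat (D - C) = transpose_mat D - transpose_mat C" using assms by (simp add: transpose_minus)
  have "transpose_mat B * (transpose_mat D - transpose_mat C) = transpose_mat B * transpose_mat D - transpose_mat B * transpose_mat C"
    using assms by (intro mult_minus_distrib_mat[where n=K]) auto
  also have "transpose_mat B * transpose_mat D = 1\<^sub>m K"
    using assms transpose_mult[of D K K B K] by simp
  finally have e1: "transpose_mat B * transpose_mat (D - C) = 1\<^sub>m K - transpose_mat B * transpose_mat C" using t by simp
  have "transpose_mat B * ((-1) \<cdot>\<^sub>m transpose_mat (D - C)) = (-1) \<cdot>\<^sub>m (transpose_mat B * transpose_mat (D - C))"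
    using assms by (intro mult_smult_distrib[where n=K]) auto
  also have "\<dots> = (-1) \<cdot>\<^sub>m (1\<^sub>m K - transpose_mat B * transpose_mat C)" using e1 by simp
  finally have e2: "transpose_mat B * ((-1) \<cdot>\<^sub>m transpose_mat (D - C)) = (-1) \<cdot>\<^sub>m (1\<^sub>m K - transpose_mat B * transpose_mat C)" .
  have "\<psi> * ((-1) \<cdot>\<^sub>m (1\<^sub>m K - transpose_mat B * transpose_mat C)) = (-1) \<cdot>\<^sub>m (\<psi> * (1\<^sub>m K - transpose_mat B * transpose_mat C))"
    using assms by (intro mult_smult_distrib[where n=K]) auto
  also have "\<psi> * (1\<^sub>m K - transpose_mat B * transpose_mat C) = \<psi> - \<psi> * (transpose_mat B * transpose_mat C)"
    using assms by (subst mult_minus_distrib_mat[where n=K]) auto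
  also have "\<psi> * (transpose_mat B * transpose_mat C) = (\<psi> * transpose_mat B) * transpose_mat C"
    using assms by (simp add: assoc_mult_mat[of _ N K _ K _ K])
  finally have e3: "\<psi> * ((-1) \<cdot>\<^sub>m (1\<^sub>m K - transpose_mat B * transpose_mat C)) = (-1) \<cdot>\<^sub>m (\<psi> - (\<psi> * transpose_mat B) * transpose_mat C)" .
  show ?thesis unfolding e2 e3 using assms by (intro eq_matI) auto
qed

lemma undress_Phi_identity:
  fixes \<phi> B Ci :: "complex mat"
  assumes "\<phi> \<in> carrier_mat N K" "B \<in> carrier_mat K K" "Ci \<in> carrier_mat K K"
  shows "1 \<cdot>\<^sub>m (\<phi> * B) + \<phi> * (Ci - B) = \<phi> * Ci"
proof -
  have "\<phi> * (Ci - B) = \<phi> * Ci - \<phi> * B" using assms by (intro mult_minus_distrib_mat[where n=K]) auto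
  then show ?thesis using assms by (intro eq_matI) auto
qed

lemma dress_Psi_identity:
  fixes \<psi> B Ci :: "complex mat"
  assumes "\<psi> \<in> carrier_mat N K" "B \<in> carrier_mat K K" "Ci \<in> carrier_mat K K"
  shows "1 \<cdot>\<^sub>m (\<psi> * transpose_mat B) + \<psi> * ((-1) \<cdot>\<^sub>m ((-1) \<cdot>\<^sub>m transpose_mat (Ci - B))) = \<psi> * transpose_mat Ci"
proof -
  have "(-1) \<cdot>\<^sub>m ((-1) \<cdot>\<^sub>m transpose_mat (Ci - B)) = transpose_mat Ci - transpose_mat B"
    using assms by (intro eq_matI) auto
  moreover have "\<psi> * (transpose_mat Ci - transpose_mat B) = \<psi> * transpose_mat Ci - \<psi> * transpose_mat B"
    using assms by (intro mult_minus_distrib_mat[where n=K]) auto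
  ultimately show ?thesis using assms by (intro eq_matI) auto
qed

lemma transpose_sandwich:
  fixes \<phi> \<psi> B :: "complex mat"
  assumes "\<phi> \<in> carrier_mat N K" "\<psi> \<in> carrier_mat N K" "B \<in> carrier_mat K K"
  shows "transpose_mat (\<phi> * B) * ((-1) \<cdot>\<^sub>m (\<psi> * transpose_mat B))
       = (-1) \<cdot>\<^sub>m transpose_mat (B * ((transpose_mat \<psi> * \<phi>) * B))"
proof -
  have "transpose_mat (B * ((transpose_mat \<psi> * \<phi>) * B)) = transpose_mat ((transpose_mat \<psi> * \<phi>) * B) * transpose_mat B"
    using assms by (intro transpose_mult[where n=K]) auto
  also have "transpose_mat ((transpose_mat \<psi> * \<phi>) * B) = transpose_mat B * transpose_mat (transpose_mat \<psi> * \<phi>)"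
    using assms by (intro transpose_mult[where n=K]) auto
  also have "transpose_mat (transpose_mat \<psi> * \<phi>) = transpose_mat \<phi> * \<psi>"
    using assms transpose_mult[of "transpose_mat \<psi>" K N \<phi> K] by simp
  finally have e1: "transpose_mat (B * ((transpose_mat \<psi> * \<phi>) * B)) = transpose_mat B * (transpose_mat \<phi> * \<psi>) * transpose_mat B" .
  have e2: "transpose_mat (\<phi> * B) = transpose_mat B * transpose_mat \<phi>"
    using assms by (intro transpose_mult[where n=K]) auto
  have "transpose_mat (\<phi> * B) * ((-1) \<cdot>\<^sub>m (\<psi> * transpose_mat B)) = (-1) \<cdot>\<^sub>m (transpose_mat (\<phi> * B) * (\<psi> * transpose_mat B))"
    using assms by (intro mult_smult_distrib[where n=N]) auto
  also have "transpose_mat (\<phi> * B) * (\<psi> * transpose_mat B) = transpose_mat B * (transpose_mat \<phi> * \<psi>) * transpose_mat B"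
    unfolding e2 using assms
    by (simp add: assoc_mult_mat[of _ K K _ N _ K] assoc_mult_mat[of _ K N _ K _ K] assoc_mult_mat[of _ K K _ K _ K])
  finally show ?thesis unfolding e1 .
qed

section \<open>The dressing transformation\<close>

text \<open>\<open>\<Delta> = C + D\<^sup>-\<^sup>1{\<psi>\<^sup>T \<phi>}\<close>, the dressing operator
  \<open>W = 1 - \<phi> \<Delta>\<^sup>-\<^sup>1 D\<^sup>-\<^sup>1 \<psi>\<^sup>T\<close> and its inverse \<open>W\<^sup>-\<^sup>1 = 1 + \<phi> D\<^sup>-\<^sup>1 \<Delta>\<^sup>-\<^sup>1 \<psi>\<^sup>T\<close>.\<close>
definition Delta :: "real \<Rightarrow> complex mat \<Rightarrow> mfun \<Rightarrow> mfun \<Rightarrow> mfun" where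
  "Delta x0 C \<phi> \<psi> = (\<lambda>x t. C + dInv x0 (mmul (mtr \<psi>) \<phi>) x t)"

definition dress :: "real \<Rightarrow> complex mat \<Rightarrow> mfun \<Rightarrow> mfun \<Rightarrow> opr" where
  "dress x0 C \<phi> \<psi> = Plus (Scal 1) (Comp (Scal (-1))
     (Comp (Mul (mmul \<phi> (finv (Delta x0 C \<phi> \<psi>)))) (Comp ODinv (Mul (mtr \<psi>)))))"

definition undress :: "real \<Rightarrow> complex mat \<Rightarrow> mfun \<Rightarrow> mfun \<Rightarrow> opr" where
  "undress x0 C \<phi> \<psi> = Plus (Scal 1)
     (Comp (Mul \<phi>) (Comp ODinv (Comp (Mul (finv (Delta x0 C \<phi> \<psi>))) (Mul (mtr \<psi>)))))"

lemma minv_transpose: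
  assumes A: "A \<in> carrier_mat n n" and detA: "det A \<noteq> 0"
  shows "minv (transpose_mat A) = transpose_mat (minv A)"
proof -
  have At: "transpose_mat A \<in> carrier_mat n n" "det (transpose_mat A) \<noteq> 0"
    using A detA det_transpose[OF A] by auto
  note inv = minv_props[OF A detA] and inv_t = minv_props[OF At]
  have right_inv: "transpose_mat A * transpose_mat (minv A) = 1\<^sub>m n"
    using transpose_mult[of "minv A" n n A n] inv A by simp
  have "minv (transpose_mat A) = minv (transpose_mat A) * (transpose_mat A * transpose_mat (minv A))"
    using right_inv inv_t by simp
  also have "\<dots> = (minv (transpose_mat A) * transpose_mat A) * transpose_mat (minv A)"
    by (rule assoc_mult_mat[symmetric]) (use inv inv_t At in auto)
  finally show ?thesis using inv inv_t by simp
qed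

locale dressing_data =
  fixes x0 :: real and N K :: nat and C :: "complex mat" and \<phi> \<psi> :: mfun
  assumes smooth_phi: "smooth_dims N K \<phi>" and smooth_psi: "smooth_dims N K \<psi>"
    and C_carrier: "C \<in> carrier_mat K K" and C_nonsingular: "det C \<noteq> 0"
    and Delta_invertible: "\<And>x t. det (Delta x0 C \<phi> \<psi> x t) \<noteq> 0"
begin

lemma gram: "smooth_dims K K (mmul (mtr \<psi>) \<phi>)"
  by (rule smooth_dims_mmul[OF smooth_dims_mtr[OF smooth_psi] smooth_phi])

lemma Delta_carrier: "Delta x0 C \<phi> \<psi> x t \<in> carrier_mat K K"
  using has_dims_dInv[OF smooth_dims_has_dims[OF gram]] C_carrier
  unfolding Delta_def has_dims_def by auto

lemma Delta_inverse:
  "finv (Delta x0 C \<phi> \<psi>) x t \<in> carrier_mat K K"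
  "Delta x0 C \<phi> \<psi> x t * finv (Delta x0 C \<phi> \<psi>) x t = 1\<^sub>m K"
  "finv (Delta x0 C \<phi> \<psi>) x t * Delta x0 C \<phi> \<psi> x t = 1\<^sub>m K"
  unfolding finv_def using minv_props[OF Delta_carrier Delta_invertible] by auto

lemma dInv_gram: "dInv x0 (mmul (mtr \<psi>) \<phi>) x t = Delta x0 C \<phi> \<psi> x t - C"
proof -
  have "dInv x0 (mmul (mtr \<psi>) \<phi>) x t \<in> carrier_mat K K"
    using has_dims_dInv[OF smooth_dims_has_dims[OF gram]] unfolding has_dims_def by blast
  then show ?thesis using C_carrier unfolding Delta_def by (intro eq_matI) auto
qed

lemma phi_carrier: "\<phi> x t \<in> carrier_mat N K" and psi_carrier: "\<psi> x t \<in> carrier_mat N K"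
  using smooth_dims_has_dims[OF smooth_phi] smooth_dims_has_dims[OF smooth_psi] unfolding has_dims_def by auto

lemma sandwich:
  "dInv x0 (\<lambda>x t. finv (Delta x0 C \<phi> \<psi>) x t * (mmul (mtr \<psi>) \<phi> x t * finv (Delta x0 C \<phi> \<psi>) x t))
     = (\<lambda>x t. minv C - finv (Delta x0 C \<phi> \<psi>) x t)"
  using dInv_inverse_sandwich[OF gram C_carrier] Delta_invertible unfolding Delta_def by blast

text \<open>\<open>W{\<phi>} = \<phi> - \<phi> \<Delta>\<^sup>-\<^sup>1 (\<Delta> - C) = \<Phi> C\<close>.\<close>
lemma dress_phi: "act x0 (dress x0 C \<phi> \<psi>) \<phi> = mmul (mmul \<phi> (finv (Delta x0 C \<phi> \<psi>))) (cst C)"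
proof (intro ext)
  fix x t
  let ?B = "finv (Delta x0 C \<phi> \<psi>) x t"
  have "act x0 (dress x0 C \<phi> \<psi>) \<phi> x t
      = 1 \<cdot>\<^sub>m \<phi> x t + (-1) \<cdot>\<^sub>m ((\<phi> x t * ?B) * (Delta x0 C \<phi> \<psi> x t - C))"
    unfolding dress_def by (simp add: mmul_def dInv_gram[unfolded mmul_def])
  also have "\<dots> = (\<phi> x t * ?B) * C"
    by (rule dress_phi_identity[OF phi_carrier Delta_inverse(1) Delta_carrier C_carrier Delta_inverse(3)])
  finally show "act x0 (dress x0 C \<phi> \<psi>) \<phi> x t = mmul (mmul \<phi> (finv (Delta x0 C \<phi> \<psi>))) (cst C) x t"
    by (simp add: mmul_def cst_def)
qed

text \<open>\<open>(W\<^sup>-\<^sup>1)\<^sup>\<tau>{\<psi>} = \<psi> - \<psi> (\<Delta>\<^sup>-\<^sup>1)\<^sup>T (\<Delta> - C)\<^sup>T = \<Psi> C\<^sup>T\<close>.\<close>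
lemma undress_psi:
  "act x0 (otr (undress x0 C \<phi> \<psi>)) \<psi>
     = mmul (mmul \<psi> (mtr (finv (Delta x0 C \<phi> \<psi>)))) (cst (transpose_mat C))"
proof (intro ext)
  fix x t
  let ?B = "finv (Delta x0 C \<phi> \<psi>) x t"
  have gram_tr: "dInv x0 (mmul (mtr \<phi>) \<psi>) x t = transpose_mat (Delta x0 C \<phi> \<psi> x t - C)"
  proof -
    have "mmul (mtr \<phi>) \<psi> = mtr (mmul (mtr \<psi>) \<phi>)"
      using phi_carrier psi_carrier by (auto intro!: ext simp: mmul_def mtr_def transpose_mult[of _ K N _ K])
    then show ?thesis using dInv_mtr[OF smooth_dims_has_dims[OF gram]] dInv_gram by (simp add: mtr_def)
  qed
  have "act x0 (otr (undress x0 C \<phi> \<psi>)) \<psi> x t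
      = 1 \<cdot>\<^sub>m \<psi> x t + \<psi> x t * (transpose_mat ?B * ((-1) \<cdot>\<^sub>m transpose_mat (Delta x0 C \<phi> \<psi> x t - C)))"
    unfolding undress_def using gram_tr[unfolded mmul_def mtr_def] by (simp add: mmul_def mtr_def)
  also have "\<dots> = (\<psi> x t * transpose_mat ?B) * transpose_mat C"
    by (rule undress_psi_identity[OF psi_carrier Delta_inverse(1) Delta_carrier C_carrier Delta_inverse(2)])
  finally show "act x0 (otr (undress x0 C \<phi> \<psi>)) \<psi> x t
      = mmul (mmul \<psi> (mtr (finv (Delta x0 C \<phi> \<psi>)))) (cst (transpose_mat C)) x t"
    by (simp add: mmul_def mtr_def cst_def)
qed

text \<open>\<open>W\<^sup>-\<^sup>1{\<Phi>} = \<Phi> + \<phi> (C\<^sup>-\<^sup>1 - \<Delta>\<^sup>-\<^sup>1) = \<phi> C\<^sup>-\<^sup>1\<close>, by the sandwich identity.\<close>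
lemma undress_Phi:
  "act x0 (undress x0 C \<phi> \<psi>) (mmul \<phi> (finv (Delta x0 C \<phi> \<psi>))) = mmul \<phi> (cst (minv C))"
proof (intro ext)
  fix x t
  let ?B = "finv (Delta x0 C \<phi> \<psi>)"
  have regroup: "mmul ?B (mmul (mtr \<psi>) (mmul \<phi> ?B))
      = (\<lambda>x t. ?B x t * (mmul (mtr \<psi>) \<phi> x t * ?B x t))"
    using phi_carrier psi_carrier Delta_inverse(1)
    by (auto intro!: ext simp: mmul_def mtr_def assoc_mult_mat[of _ K N _ K _ K])
  have "act x0 (undress x0 C \<phi> \<psi>) (mmul \<phi> ?B) x t = 1 \<cdot>\<^sub>m (\<phi> x t * ?B x t) + \<phi> x t * (minv C - ?B x t)"
    unfolding undress_def by (simp add: regroup sandwich) (simp add: mmul_def)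
  also have "\<dots> = \<phi> x t * minv C"
    by (rule undress_Phi_identity[OF phi_carrier Delta_inverse(1) minv_props(1)[OF C_carrier C_nonsingular]])
  finally show "act x0 (undress x0 C \<phi> \<psi>) (mmul \<phi> ?B) x t = mmul \<phi> (cst (minv C)) x t"
    by (simp add: mmul_def cst_def)
qed

text \<open>\<open>W\<^sup>\<tau>{\<Psi>} = \<psi> (C\<^sup>T)\<^sup>-\<^sup>1\<close>, by the transposed sandwich identity.\<close>
lemma dress_Psi:
  "act x0 (otr (dress x0 C \<phi> \<psi>)) (mmul \<psi> (mtr (finv (Delta x0 C \<phi> \<psi>))))
     = mmul \<psi> (cst (minv (transpose_mat C)))"
proof (intro ext)
  fix x t
  let ?B = "finv (Delta x0 C \<phi> \<psi>)"
  let ?S = "\<lambda>x t. ?B x t * (mmul (mtr \<psi>) \<phi> x t * ?B x t)"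
  have dim_S: "has_dims ?S K K"
    using Delta_inverse(1) smooth_dims_has_dims[OF gram]
    by (auto simp: has_dims_def intro!: mult_carrier_mat[of _ K K _ K])
  have regroup: "mmul (mtr (mmul \<phi> ?B)) (\<lambda>x t. (-1) \<cdot>\<^sub>m mmul \<psi> (mtr ?B) x t)
      = (\<lambda>x t. (-1) \<cdot>\<^sub>m mtr ?S x t)"
    by (auto intro!: ext simp: mmul_def mtr_def
        transpose_sandwich[OF phi_carrier psi_carrier Delta_inverse(1)])
  have integral: "dInv x0 (mmul (mtr (mmul \<phi> ?B)) (\<lambda>x t. (-1) \<cdot>\<^sub>m mmul \<psi> (mtr ?B) x t))
      = (\<lambda>x t. (-1) \<cdot>\<^sub>m transpose_mat (minv C - ?B x t))"
    unfolding regroup dInv_neg[OF has_dims_mtr[OF dim_S]] dInv_mtr[OF dim_S] sandwich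
    by (simp add: mtr_def)
  have "act x0 (otr (dress x0 C \<phi> \<psi>)) (mmul \<psi> (mtr ?B)) x t
      = 1 \<cdot>\<^sub>m (\<psi> x t * transpose_mat (?B x t))
        + \<psi> x t * ((-1) \<cdot>\<^sub>m ((-1) \<cdot>\<^sub>m transpose_mat (minv C - ?B x t)))"
    unfolding dress_def by (simp add: integral) (simp add: mmul_def mtr_def)
  also have "\<dots> = \<psi> x t * transpose_mat (minv C)"
    by (rule dress_Psi_identity[OF psi_carrier Delta_inverse(1) minv_props(1)[OF C_carrier C_nonsingular]])
  finally show "act x0 (otr (dress x0 C \<phi> \<psi>)) (mmul \<psi> (mtr ?B)) x t
      = mmul \<psi> (cst (minv (transpose_mat C))) x t"
    by (simp add: mmul_def cst_def minv_transpose[OF C_carrier C_nonsingular])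
qed

lemma dims_Phi_Psi:
  "has_dims (mmul \<phi> (finv (Delta x0 C \<phi> \<psi>))) N K"
  "has_dims (mmul \<psi> (mtr (finv (Delta x0 C \<phi> \<psi>)))) N K"
  using phi_carrier psi_carrier Delta_inverse(1)
  by (auto simp: has_dims_def mmul_def mtr_def intro!: mult_carrier_mat[of _ N K _ K])

lemma linear_op_dress: "linear_op x0 (dress x0 C \<phi> \<psi>) N N"
  unfolding dress_def
  by (rule linear_op_Plus[OF linear_op_smooth_op[OF smooth_op_Scal]
        linear_op_Comp_pointwise_op[OF linear_op_Comp_pointwise_op[OF
        linear_op_Comp_smooth_op[OF smooth_op_Mul[OF smooth_dims_mtr[OF smooth_psi]] linear_op_ODinv]
        pointwise_op_Mul[OF dims_Phi_Psi(1)]] pointwise_op_Scal]])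

lemma linear_op_otr_undress: "linear_op x0 (otr (undress x0 C \<phi> \<psi>)) N N"
proof -
  have dims: "has_dims (mtr (finv (Delta x0 C \<phi> \<psi>))) K K" "has_dims (mtr (mtr \<psi>)) N K"
    using Delta_inverse(1) smooth_dims_has_dims[OF smooth_psi]
    by (auto simp: has_dims_def mtr_def)
  show ?thesis
    unfolding undress_def otr.simps
    by (rule linear_op_Plus[OF linear_op_smooth_op[OF smooth_op_Scal]
        linear_op_Comp_smooth_op[OF smooth_op_Mul[OF smooth_dims_mtr[OF smooth_phi]]
        linear_op_Comp_pointwise_op[OF linear_op_Comp_pointwise_op[OF linear_op_ODinv pointwise_op_Scal]
        pointwise_op_Comp[OF pointwise_op_Mul[OF dims(1)] pointwise_op_Mul[OF dims(2)]]]]])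
qed

end

lemma linear_op_right_linear: "linear_op x0 P r r' \<Longrightarrow> smooth_dims r c F \<Longrightarrow> right_linear x0 P F c"
  unfolding linear_op_def by blast

lemma mmul_cst_minv:
  assumes "has_dims F r k" "A \<in> carrier_mat k k" "det A \<noteq> 0"
  shows "mmul (mmul F (cst A)) (cst (minv A)) = F"
  using mmul_cst_assoc[OF assms(1,2) minv_props(1)[OF assms(2,3)]] minv_props(2)[OF assms(2,3)] assms(1)
  by (auto intro!: ext simp: mmul_def cst_def has_dims_def right_mult_one_mat[of _ r k])

lemma conjugated_eigenfunction:
  assumes phi: "has_dims \<phi> r k" and Phi: "has_dims \<Phi> r k"
    and Lam: "\<Lambda> \<in> carrier_mat k k" and C: "C \<in> carrier_mat k k" and C': "C' \<in> carrier_mat k k"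
    and undress: "act x0 U \<Phi> = mmul \<phi> (cst C')"
    and eigen: "act x0 P \<phi> = mmul \<phi> (cst \<Lambda>)" and lin_P: "right_linear x0 P \<phi> k"
    and dress: "act x0 W \<phi> = mmul \<Phi> (cst C)" and lin_W: "right_linear x0 W \<phi> k"
  shows "act x0 (Comp W (Comp P U)) \<Phi> = mmul \<Phi> (cst (C * \<Lambda> * C'))"
proof -
  have "act x0 (Comp W (Comp P U)) \<Phi> = act x0 W (act x0 P (mmul \<phi> (cst C')))"
    by (simp add: undress)
  also have "act x0 P (mmul \<phi> (cst C')) = mmul (mmul \<phi> (cst \<Lambda>)) (cst C')"
    using lin_P C' eigen unfolding right_linear_def by metis
  also have "\<dots> = mmul \<phi> (cst (\<Lambda> * C'))" by (rule mmul_cst_assoc[OF phi Lam C'])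
  also have "act x0 W \<dots> = mmul (mmul \<Phi> (cst C)) (cst (\<Lambda> * C'))"
    using lin_W mult_carrier_mat[OF Lam C'] dress unfolding right_linear_def by metis
  also have "\<dots> = mmul \<Phi> (cst (C * (\<Lambda> * C')))"
    by (rule mmul_cst_assoc[OF Phi C mult_carrier_mat[OF Lam C']])
  also have "C * (\<Lambda> * C') = C * \<Lambda> * C'" using C Lam C' by simp
  finally show ?thesis .
qed

theorem corollary3:
  fixes N K m n :: nat and x0 :: real
    and \<alpha> \<gamma> :: complex and J M0 \<Lambda> \<Lambda>' C :: "complex mat"
    and v :: "nat \<Rightarrow> mfun" and q r \<phi> \<psi> :: mfun
  defines "M \<equiv> Mop n \<alpha> J v \<gamma> q M0 r"
  defines "\<Delta> \<equiv> (\<lambda>x t. C + dInv x0 (mmul (mtr \<psi>) \<phi>) x t)"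
  defines "W \<equiv> Plus (Scal 1) (Comp (Scal (-1))
                 (Comp (Mul (mmul \<phi> (finv \<Delta>))) (Comp ODinv (Mul (mtr \<psi>)))))"
  defines "Winv \<equiv> Plus (Scal 1) (Comp (Mul \<phi>) (Comp ODinv (Comp (Mul (finv \<Delta>)) (Mul (mtr \<psi>)))))"
  defines "Mhat \<equiv> Comp W (Comp M Winv)"
  defines "\<Phi> \<equiv> mmul \<phi> (finv \<Delta>)"
  defines "\<Psi> \<equiv> mmul \<psi> (mtr (finv \<Delta>))"
  assumes J: "J \<in> carrier_mat N N" and M0: "M0 \<in> carrier_mat m m"
    and v: "\<And>i. i < n \<Longrightarrow> has_dims (v i) N N \<and> smooth_mfun (v i)"
    and q: "has_dims q N m" "smooth_mfun q"
    and r: "has_dims r N m" "smooth_mfun r"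
    and phi: "has_dims \<phi> N K" "smooth_mfun \<phi>"
    and psi: "has_dims \<psi> N K" "smooth_mfun \<psi>"
    and Lam: "\<Lambda> \<in> carrier_mat K K" "\<Lambda>' \<in> carrier_mat K K"
    and C: "C \<in> carrier_mat K K" "det C \<noteq> 0"
    and Delta_inv: "\<And>x t. det (\<Delta> x t) \<noteq> 0"
    and eq_phi: "act x0 M \<phi> = mmul \<phi> (cst \<Lambda>)"
    and eq_psi: "act x0 (otr M) \<psi> = mmul \<psi> (cst \<Lambda>')"
  shows "\<Phi> = mmul (act x0 W \<phi>) (cst (minv C))
    \<and> \<Psi> = mmul (act x0 (otr Winv) \<psi>) (cst (minv (transpose_mat C)))
    \<and> act x0 Mhat \<Phi> = mmul \<Phi> (cst (C * \<Lambda> * minv C))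
    \<and> act x0 (otr Mhat) \<Psi> = mmul \<Psi> (cst (transpose_mat C * \<Lambda>' * minv (transpose_mat C)))"
proof -
  have smooth: "smooth_dims N K \<phi>" "smooth_dims N K \<psi>"
    using smooth_mfun_smooth_dims phi psi by blast+
  have lin_M: "linear_op x0 M N N" "linear_op x0 (otr M) N N"
    unfolding M_def using J M0 v q r
    by (auto intro!: linear_op_M linear_op_otr_M smooth_mfun_smooth_dims)
  have Delta: "\<Delta> = Delta x0 C \<phi> \<psi>" unfolding \<Delta>_def Delta_def ..
  interpret dressing_data x0 N K C \<phi> \<psi>
    using smooth C Delta_inv by unfold_locales (simp_all add: Delta)
  have W: "W = dress x0 C \<phi> \<psi>" and Winv: "Winv = undress x0 C \<phi> \<psi>"
    unfolding W_def Winv_def dress_def undress_def Delta by simp_all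
  note dressed = dress_phi undress_psi undress_Phi dress_Psi dims_Phi_Psi
  note dressed = dressed[folded Delta W Winv, folded \<Phi>_def \<Psi>_def]
  have CT: "transpose_mat C \<in> carrier_mat K K" "det (transpose_mat C) \<noteq> 0"
    using C det_transpose[OF C(1)] by auto
  have eigen_Phi: "act x0 Mhat \<Phi> = mmul \<Phi> (cst (C * \<Lambda> * minv C))"
    unfolding Mhat_def using linear_op_dress lin_M smooth
    by (intro conjugated_eigenfunction[OF phi(1) _ Lam(1) C(1) minv_props(1)[OF C]] dressed eq_phi)
       (auto simp: W intro: linear_op_right_linear)
  have "act x0 (otr Mhat) \<Psi> = act x0 (Comp (otr Winv) (Comp (otr M) (otr W))) \<Psi>"
    unfolding Mhat_def by simp
  also have "\<dots> = mmul \<Psi> (cst (transpose_mat C * \<Lambda>' * minv (transpose_mat C)))"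
    using linear_op_otr_undress lin_M smooth
    by (intro conjugated_eigenfunction[OF psi(1) _ Lam(2) CT(1) minv_props(1)[OF CT]] dressed eq_psi)
       (auto simp: Winv intro: linear_op_right_linear)
  finally show ?thesis
    using eigen_Phi mmul_cst_minv[OF _ C] mmul_cst_minv[OF _ CT] dressed by simp
qed

end
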